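(* Let $A$ be a parametric timed B\"uchi automaton with parameter bounds $lb,ub$. Then the pk-extrapolation $\alpha_{pk}$ is a finite abstraction over the symbolic semantics $[\![A]\!]$.
   Context: Parameters and guards. $P$ is a finite set of parameters; $E(P)$ is the set of affine expressions $z_0+\sum z_ip_i$ ($z_i\in\mathbb Z$). A parameter valuation is $v:P\to\mathbb Z$; bounds $lb,ub:P\to\mathbb Z$ are fixed; $max_{lb,ub}(e)$ replaces parameters with positive coefficients by $ub(p)$ and those with negative coefficients by $lb(p)$. $X$ is a finite set of clocks with zero clock $x_0$. A guard is a finite conjunction of $x_i-x_j\sim e$ ($e\in E(P)$, $\sim\in\{\le,<\}$), simple if always $x_i=x_0$ or $x_j=x_0$. Clock valuations $\eta:X\to\mathbb R_{\ge0}$, $\eta(x_0)=0$; $\eta+d$, $\eta\langle R\rangle$ as usual. A PTA $M=(L,l_0,X,P,\Delta,Inv)$ with $\Delta\subseteq L\times(\text{simple guards})\times2^X\times L$, $Inv$ simple guards; $[\![M]\!]_v$ has states $(l,\eta)$, initial $(l_0,\mathbf0)$, delays $(l,\eta)\xrightarrow{d}(l,\eta+d)$ when $(v,\eta+d)\models Inv(l)$, action steps $(l,\eta)\xrightarrow{act}(l',\eta\langle R\rangle)$ when $(l,g,R,l')\in\Delta$, $(v,\eta)\models g$, $(v,\eta\langle R\rangle)\models Inv(l')$. A PTBA is $A=(M,F)$, $F\subseteq L$. Constraints $e\sim e'$, finite constraint sets $C$, $[\![C]\!]$, $C\models c$. PDBM $D$ with entries $D_{ij}:x_i-x_j\prec_{ij}e_{ij}$,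 $e_{ij}\in E(P)\cup\{\infty\}$, $e_{ii}=0$; CPDBM $(C,D)$ with $C\models e_{0i}\ge0$, $[\![C,D]\!]=\{(v,\eta):v\in[\![C]\!],\eta\text{ satisfies }D\text{ under }v\}$. With $\le$ read as true and $<$ as false: reset sets entries $rj:=D_{0j}$, $ir:=D_{i0}$; time successor sets entries $i0:=(\infty,<)$, $i\ne0$; guard $g:x_i-x_j\prec e$ with $c:=e_{ij}(\prec_{ij}\Rightarrow\prec)e$ gives $(C,D)[g]=\{(C,D[g])\}$ if $C\models\neg c$, $\{(C,D)\}$ if $C\models c$, else $\{(C\cup\{c\},D),(C\cup\{\neg c\},D[g])\}$ ($D[g]$ sets entry $ij$ to $(e,\prec)$); canonisation $(C,D)_c$ is the set of outcomes of the nondeterministic Floyd–Warshall procedure applying, for $k,i,j=0..|X|$, the guard $x_i-x_j(\prec_{ik}\wedge\prec_{kj})e_{ik}+e_{kj}$. Symbolic semantics $[\![A]\!]$: states $(l,[\![C,D]\!])$; initial states $(l_0,[\![C,D]\!])$ with $(C,D)\in(C_0,E^\uparrow)[Inv(l_0)]$, $E$ all entries $(0,\le)$, $C_0=\{lb(p)\le p,p\le ub(p)\}$; $(l,[\![C,D]\!])\Longrightarrow(l',[\![C'_c,D'_c]\!])$ iff $(l,g,R,l')\in\Delta$, $(C'',D'')\in(C,D)[g]$, $(C''_c,D''_c)\in(C'',D'')_c$, $(C',D')\in(C''_c,D''_c\langle R\rangle^\uparrow)[Inv(l')]$, $(C'_c,D'_c)\in(C',D')_c$. Abstraction. $s\in_vS$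 for concrete $s=(l,\eta)$ and symbolic $S=(l,[\![C,D]\!])$ means $v\in[\![C]\!]$ and $\eta$ satisfies $D$ under $v$. $\preccurlyeq$ is the largest time-abstracting simulation on $[\![M]\!]_v$ (matching action steps by action steps and delays by some delays, preserving the relation). An abstraction over $[\![A]\!]$ is a map $\alpha$ from symbolic states to sets of symbolic states such that (i) $(l',[\![C',D']\!])\in\alpha((l,[\![C,D]\!]))$ implies $l=l'$, $[\![C']\!]\subseteq[\![C]\!]$ and $[\![C',D]\!]\subseteq[\![C',D']\!]$; (ii) for each $v\in[\![C]\!]$ there exist $S_1,S_2$ with $S_2\in\alpha(S_1)$ such that each $s\in_vS_2$ has $s'\in_vS_1$ with $s\preccurlyeq s'$. It is finite if its image is finite. pk-extrapolation: $M(x)$ is the maximum of $max_{lb,ub}(e)$ over expressions $e$ compared with clock $x$ in guards or invariants of $A$. For $(l,[\![C,D]\!])$ with $D_{ij}:x_i-x_j\prec_{ij}e_{ij}$, $\alpha_{pk}(l,[\![C,D]\!])$ is the set of all $(l,[\![C',D']\!])$ such that for each $i,j$ one holds: $D'_{ij}=D_{ij}$ and $(e_{ij}\le M(x_i))\in C'$; $D'_{ij}:x_i-x_j<\infty$ and $(e_{ij}>M(x_i))\in C'$; $D'_{ij}=D_{ij}$ and $(e_{ij}\ge-M(x_j))\in C'$; $D'_{ij}:x_i-x_j<-M(x_j)$ and $(e_{ij}<-M(x_j))\in C'$. *)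

theory Defs
  imports Complex_Main
begin

text \<open>The finite parameter set P is the (finite) type 'p.  An affine expression
  z0 + sum z_i p_i is a pair (z0, coefficient function).\<close>

type_synonym 'p expr = "int \<times> ('p \<Rightarrow> int)"
type_synonym 'p pval = "'p \<Rightarrow> int"

definition const_e :: "int \<Rightarrow> 'p expr" where
  "const_e c = (c, \<lambda>_. 0)"

definition var_e :: "'p \<Rightarrow> 'p expr" where
  "var_e p = (0, \<lambda>q. if q = p then 1 else 0)"

definition add_e :: "'p expr \<Rightarrow> 'p expr \<Rightarrow> 'p expr" where
  "add_e e e' = (fst e + fst e', \<lambda>p. snd e p + snd e' p)"

definition neg_e :: "'p expr \<Rightarrow> 'p expr" where
  "neg_e e = (- fst e, \<lambda>p. - snd e p)"

definition ev :: "'p::finite pval \<Rightarrow> 'p expr \<Rightarrow> int" where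
  "ev v e = fst e + (\<Sum>p\<in>UNIV. snd e p * v p)"

definition max_lu :: "'p::finite pval \<Rightarrow> 'p pval \<Rightarrow> 'p expr \<Rightarrow> int" where
  "max_lu lb ub e = fst e + (\<Sum>p\<in>UNIV. if snd e p > 0 then snd e p * ub p else snd e p * lb p)"

text \<open>Clocks are x_0, ..., x_n (indices 0..n), x_0 is the zero clock.
  An atom (i, j, b, e) is  x_i - x_j <= e  if b, and  x_i - x_j < e  otherwise.\<close>

type_synonym 'p atom = "nat \<times> nat \<times> bool \<times> 'p expr"
type_synonym 'p guard = "'p atom list"
type_synonym clockval = "nat \<Rightarrow> real"

definition simple_guard :: "'p guard \<Rightarrow> bool" where
  "simple_guard g \<longleftrightarrow> (\<forall>(i, j, b, e) \<in> set g. i = 0 \<or> j = 0)"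

definition guard_clocks :: "nat \<Rightarrow> 'p guard \<Rightarrow> bool" where
  "guard_clocks n g \<longleftrightarrow> (\<forall>(i, j, b, e) \<in> set g. i \<le> n \<and> j \<le> n)"

definition sat_bound :: "bool \<Rightarrow> real \<Rightarrow> int \<Rightarrow> bool" where
  "sat_bound b d c = (if b then d \<le> real_of_int c else d < real_of_int c)"

definition sat_guard :: "'p::finite pval \<Rightarrow> clockval \<Rightarrow> 'p guard \<Rightarrow> bool" where
  "sat_guard v \<eta> g \<longleftrightarrow> (\<forall>(i, j, b, e) \<in> set g. sat_bound b (\<eta> i - \<eta> j) (ev v e))"

definition delay :: "clockval \<Rightarrow> real \<Rightarrow> clockval" where
  "delay \<eta> d = (\<lambda>i. if i = 0 then 0 else \<eta> i + d)"

definition reset :: "clockval \<Rightarrow> nat set \<Rightarrow> clockval" where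
  "reset \<eta> R = (\<lambda>i. if i \<in> R then 0 else \<eta> i)"

record ('l, 'p) pta =
  locs :: "'l set"
  init :: 'l
  nclk :: nat
  trans :: "('l \<times> 'p guard \<times> nat set \<times> 'l) set"
  inv :: "'l \<Rightarrow> 'p guard"

text \<open>A PTBA is a PTA together with a set of accepting locations.\<close>
type_synonym ('l, 'p) ptba = "('l, 'p) pta \<times> 'l set"

definition wf_ptba :: "('l, 'p) ptba \<Rightarrow> bool" where
  "wf_ptba A \<longleftrightarrow> (let M = fst A in
     finite (locs M) \<and> init M \<in> locs M \<and> finite (trans M) \<and> snd A \<subseteq> locs M \<and>
     (\<forall>(l, g, R, l') \<in> trans M. l \<in> locs M \<and> l' \<in> locs M \<and> simple_guard g \<and>
         guard_clocks (nclk M) g \<and> R \<subseteq> {0..nclk M}) \<and>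
     (\<forall>l \<in> locs M. simple_guard (inv M l) \<and> guard_clocks (nclk M) (inv M l)))"

section \<open>Concrete semantics [[M]]_v and time-abstracting simulation\<close>

definition delay_step :: "('l, 'p::finite) pta \<Rightarrow> 'p pval \<Rightarrow> 'l \<times> clockval \<Rightarrow> 'l \<times> clockval \<Rightarrow> bool" where
  "delay_step M v s s' \<longleftrightarrow> (\<exists>d::real. d \<ge> 0 \<and> fst s' = fst s \<and> snd s' = delay (snd s) d \<and>
      sat_guard v (snd s') (inv M (fst s)))"

definition act_step :: "('l, 'p::finite) pta \<Rightarrow> 'p pval \<Rightarrow> 'l \<times> clockval \<Rightarrow> 'l \<times> clockval \<Rightarrow> bool" where
  "act_step M v s s' \<longleftrightarrow> (\<exists>g R. (fst s, g, R, fst s') \<in> trans M \<and> sat_guard v (snd s) g \<and>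
      snd s' = reset (snd s) R \<and> sat_guard v (snd s') (inv M (fst s')))"

definition ta_simulation :: "('l, 'p::finite) pta \<Rightarrow> 'p pval \<Rightarrow> (('l \<times> clockval) \<times> ('l \<times> clockval)) set \<Rightarrow> bool" where
  "ta_simulation M v Rel \<longleftrightarrow> (\<forall>s1 s2. (s1, s2) \<in> Rel \<longrightarrow>
      fst s1 = fst s2 \<and>
      (\<forall>s1'. act_step M v s1 s1' \<longrightarrow> (\<exists>s2'. act_step M v s2 s2' \<and> (s1', s2') \<in> Rel)) \<and>
      (\<forall>s1'. delay_step M v s1 s1' \<longrightarrow> (\<exists>s2'. delay_step M v s2 s2' \<and> (s1', s2') \<in> Rel)))"

definition sim :: "('l, 'p::finite) pta \<Rightarrow> 'p pval \<Rightarrow> 'l \<times> clockval \<Rightarrow> 'l \<times> clockval \<Rightarrow> bool" where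
  "sim M v s s' \<longleftrightarrow> (\<exists>Rel. ta_simulation M v Rel \<and> (s, s') \<in> Rel)"

section \<open>Constraints and constrained parametric DBMs\<close>

text \<open>A constraint (e, b, e') is  e <= e'  if b and  e < e'  otherwise.\<close>
type_synonym 'p constr = "'p expr \<times> bool \<times> 'p expr"

definition sat_c :: "'p::finite pval \<Rightarrow> 'p constr \<Rightarrow> bool" where
  "sat_c v c = (case c of (e, b, e') \<Rightarrow> if b then ev v e \<le> ev v e' else ev v e < ev v e')"

definition neg_c :: "'p constr \<Rightarrow> 'p constr" where
  "neg_c c = (case c of (e, b, e') \<Rightarrow> (e', \<not> b, e))"

definition csem :: "'p::finite constr set \<Rightarrow> 'p pval set" where
  "csem C = {v. \<forall>c \<in> C. sat_c v c}"

definition entails :: "'p::finite constr set \<Rightarrow> 'p constr \<Rightarrow> bool" where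
  "entails C c \<longleftrightarrow> (\<forall>v \<in> csem C. sat_c v c)"

text \<open>A PDBM entry: bound (None = infinity) and flag (True = <=, False = <).\<close>
type_synonym 'p bnd = "'p expr option \<times> bool"
type_synonym 'p dbm = "nat \<Rightarrow> nat \<Rightarrow> 'p bnd"

definition sat_bnd :: "'p::finite pval \<Rightarrow> real \<Rightarrow> 'p bnd \<Rightarrow> bool" where
  "sat_bnd v d b = (case fst b of None \<Rightarrow> True | Some e \<Rightarrow> sat_bound (snd b) d (ev v e))"

definition zone :: "nat \<Rightarrow> 'p::finite constr set \<Rightarrow> 'p dbm \<Rightarrow> ('p pval \<times> clockval) set" where
  "zone n C D = {(v, \<eta>). v \<in> csem C \<and> \<eta> 0 = 0 \<and> (\<forall>i. 0 \<le> \<eta> i) \<and>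
      (\<forall>i \<le> n. \<forall>j \<le> n. sat_bnd v (\<eta> i - \<eta> j) (D i j))}"

definition add_bnd :: "'p bnd \<Rightarrow> 'p bnd \<Rightarrow> 'p bnd" where
  "add_bnd b b' = ((case (fst b, fst b') of (Some e, Some e') \<Rightarrow> Some (add_e e e') | _ \<Rightarrow> None),
                   snd b \<and> snd b')"

definition upd_dbm :: "'p dbm \<Rightarrow> nat \<Rightarrow> nat \<Rightarrow> 'p bnd \<Rightarrow> 'p dbm" where
  "upd_dbm D i j b = D(i := (D i)(j := b))"

definition apply_bnd :: "nat \<Rightarrow> nat \<Rightarrow> 'p::finite bnd \<Rightarrow> 'p constr set \<times> 'p dbm \<Rightarrow> ('p constr set \<times> 'p dbm) set" where
  "apply_bnd i j g CD = (case CD of (C, D) \<Rightarrow>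
     (case fst g of
        None \<Rightarrow> {(C, D)}
      | Some e \<Rightarrow>
          (case fst (D i j) of
             None \<Rightarrow> {(C, upd_dbm D i j g)}
           | Some eij \<Rightarrow>
               (let c = (eij, (snd (D i j) \<longrightarrow> snd g), e) in
                if entails C (neg_c c) then {(C, upd_dbm D i j g)}
                else if entails C c then {(C, D)}
                else {(insert c C, D), (insert (neg_c c) C, upd_dbm D i j g)}))))"

definition app_guard :: "'p::finite guard \<Rightarrow> 'p constr set \<times> 'p dbm \<Rightarrow> ('p constr set \<times> 'p dbm) set" where
  "app_guard g CD = foldl (\<lambda>S a. case a of (i, j, b, e) \<Rightarrow> \<Union>x\<in>S. apply_bnd i j (Some e, b) x) {CD} g"

text \<open>Nondeterministic Floyd-Warshall canonisation.\<close>
definition canon :: "nat \<Rightarrow> 'p::finite constr set \<times> 'p dbm \<Rightarrow> ('p constr set \<times> 'p dbm) set" where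
  "canon n CD = foldl (\<lambda>S kij. case kij of (k, i, j) \<Rightarrow>
        \<Union>x\<in>S. apply_bnd i j (add_bnd (snd x i k) (snd x k j)) x)
     {CD} [(k, i, j). k \<leftarrow> [0..<Suc n], i \<leftarrow> [0..<Suc n], j \<leftarrow> [0..<Suc n]]"

definition reset_dbm :: "nat set \<Rightarrow> 'p dbm \<Rightarrow> 'p dbm" where
  "reset_dbm R D = (\<lambda>i j. D (if i \<in> R then 0 else i) (if j \<in> R then 0 else j))"

definition up :: "'p dbm \<Rightarrow> 'p dbm" where
  "up D = (\<lambda>i j. if i \<noteq> 0 \<and> j = 0 then (None, False) else D i j)"

definition E_dbm :: "'p dbm" where
  "E_dbm = (\<lambda>i j. (Some (const_e 0), True))"

definition C0 :: "'p pval \<Rightarrow> 'p pval \<Rightarrow> 'p constr set" where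
  "C0 lb ub = {(const_e (lb p), True, var_e p) | p. True} \<union> {(var_e p, True, const_e (ub p)) | p. True}"

section \<open>Symbolic semantics [[A]] (on representatives (l, C, D))\<close>

type_synonym ('l, 'p) sstate = "'l \<times> 'p constr set \<times> 'p dbm"

definition sym_init :: "('l, 'p::finite) ptba \<Rightarrow> 'p pval \<Rightarrow> 'p pval \<Rightarrow> ('l, 'p) sstate set" where
  "sym_init A lb ub = {(init (fst A), C, D) | C D.
      (C, D) \<in> app_guard (inv (fst A) (init (fst A))) (C0 lb ub, up E_dbm)}"

definition sym_step :: "('l, 'p::finite) ptba \<Rightarrow> ('l, 'p) sstate \<Rightarrow> ('l, 'p) sstate \<Rightarrow> bool" where
  "sym_step A S S' \<longleftrightarrow> (case S of (l, C, D) \<Rightarrow> case S' of (l', C', D') \<Rightarrow>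
     (\<exists>g R C1 D1 C2 D2 C3 D3. (l, g, R, l') \<in> trans (fst A) \<and>
        (C1, D1) \<in> app_guard g (C, D) \<and>
        (C2, D2) \<in> canon (nclk (fst A)) (C1, D1) \<and>
        (C3, D3) \<in> app_guard (inv (fst A) l') (C2, up (reset_dbm R D2)) \<and>
        (C', D') \<in> canon (nclk (fst A)) (C3, D3)))"

definition sym_reach :: "('l, 'p::finite) ptba \<Rightarrow> 'p pval \<Rightarrow> 'p pval \<Rightarrow> ('l, 'p) sstate set" where
  "sym_reach A lb ub = {S'. \<exists>S \<in> sym_init A lb ub. (S, S') \<in> {(X, Y). sym_step A X Y}\<^sup>*}"

definition sem_state :: "nat \<Rightarrow> ('l, 'p::finite) sstate \<Rightarrow> 'l \<times> ('p pval \<times> clockval) set" where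
  "sem_state n S = (case S of (l, C, D) \<Rightarrow> (l, zone n C D))"

definition is_abstraction :: "('l, 'p::finite) ptba \<Rightarrow> 'p pval \<Rightarrow> 'p pval \<Rightarrow>
    (('l, 'p) sstate \<Rightarrow> ('l, 'p) sstate set) \<Rightarrow> bool" where
  "is_abstraction A lb ub \<alpha> \<longleftrightarrow> (let n = nclk (fst A) in
     \<forall>S1 \<in> sym_reach A lb ub. \<forall>S2 \<in> \<alpha> S1.
       (case S1 of (l, C, D) \<Rightarrow> case S2 of (l', C', D') \<Rightarrow>
          l' = l \<and> csem C' \<subseteq> csem C \<and> zone n C' D \<subseteq> zone n C' D' \<and>
          (\<forall>v \<eta>. (v, \<eta>) \<in> zone n C' D' \<longrightarrow>
              (\<exists>\<eta>'. (v, \<eta>') \<in> zone n C D \<and> sim (fst A) v (l', \<eta>) (l, \<eta>')))))"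

definition finite_abstraction :: "('l, 'p::finite) ptba \<Rightarrow> 'p pval \<Rightarrow> 'p pval \<Rightarrow>
    (('l, 'p) sstate \<Rightarrow> ('l, 'p) sstate set) \<Rightarrow> bool" where
  "finite_abstraction A lb ub \<alpha> \<longleftrightarrow>
     finite (sem_state (nclk (fst A)) ` (\<Union>S \<in> sym_reach A lb ub. \<alpha> S))"

section \<open>pk-extrapolation\<close>

text \<open>Expressions compared with clock x_k (k > 0): e for an upper-bound atom
  x_k - x_0 \<prec> e, and -e for a lower-bound atom x_0 - x_k \<prec> e (i.e. x_k \<succ> -e).\<close>
definition all_guards :: "('l, 'p) ptba \<Rightarrow> 'p guard set" where
  "all_guards A = {g. \<exists>l R l'. (l, g, R, l') \<in> trans (fst A)} \<union> inv (fst A) ` locs (fst A)"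

definition cmp_exprs :: "('l, 'p) ptba \<Rightarrow> nat \<Rightarrow> 'p expr set" where
  "cmp_exprs A k = {e. k \<noteq> 0 \<and> (\<exists>g \<in> all_guards A. \<exists>b e0.
      ((k, 0, b, e0) \<in> set g \<and> e = e0) \<or> ((0, k, b, e0) \<in> set g \<and> e = neg_e e0))}"

definition Mx :: "('l, 'p::finite) ptba \<Rightarrow> 'p pval \<Rightarrow> 'p pval \<Rightarrow> nat \<Rightarrow> int" where
  "Mx A lb ub k = (let S = max_lu lb ub ` cmp_exprs A k in if S = {} then 0 else Max S)"

definition pk_ok :: "('l, 'p::finite) ptba \<Rightarrow> 'p pval \<Rightarrow> 'p pval \<Rightarrow>
    'p constr set \<times> 'p dbm \<Rightarrow> 'p constr set \<times> 'p dbm \<Rightarrow> bool" where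
  "pk_ok A lb ub CD CD' \<longleftrightarrow> (case CD of (C, D) \<Rightarrow> case CD' of (C', D') \<Rightarrow>
     (let n = nclk (fst A); M = Mx A lb ub in
      \<exists>cs :: nat \<Rightarrow> nat \<Rightarrow> 'p constr set.
        C' = C \<union> (\<Union>i \<in> {0..n}. \<Union>j \<in> {0..n}. cs i j) \<and>
        (\<forall>i j. \<not> (i \<le> n \<and> j \<le> n) \<longrightarrow> D' i j = D i j) \<and>
        (\<forall>i \<le> n. \<forall>j \<le> n.
          (case fst (D i j) of
             None \<Rightarrow> D' i j = D i j \<and> cs i j = {}
           | Some e \<Rightarrow>
               (D' i j = D i j \<and>
                  cs i j = {(e, True, const_e (M i)), (const_e (- M j), True, e)}) \<or>
               (D' i j = (None, False) \<and> cs i j = {(const_e (M i), False, e)}) \<or>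
               (D' i j = (Some (const_e (- M j)), False) \<and> cs i j = {(e, False, const_e (- M j))})))))"

definition alpha_pk :: "('l, 'p::finite) ptba \<Rightarrow> 'p pval \<Rightarrow> 'p pval \<Rightarrow> ('l, 'p) sstate \<Rightarrow> ('l, 'p) sstate set" where
  "alpha_pk A lb ub S = (case S of (l, C, D) \<Rightarrow> {(l, C', D') | C' D'. pk_ok A lb ub (C, D) (C', D')})"

end

theory Submission
  imports Defs
begin

text \<open>Under a fixed parameter valuation v, every case split of the symbolic semantics is decided by
  the constraints it adds, so a parametric DBM evaluates to an ordinary DBM and the symbolic
  operations become the usual min-updates. For admissible v the reachable matrices are canonical:
  simple guards do not touch the block of the non-zero clocks, which therefore stays closed, and
  Floyd--Warshall then closes the whole matrix unless it finds a negative cycle through the zero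
  clock. The only exception are the initial states, in which all clocks are equal. For these
  matrices the classical argument for extrapolation works: a valuation of the extrapolated zone is
  mapped back by keeping the clocks that are at most their maximal constant and placing the others,
  one at a time, above their constants. Clocks that agree up to their maximal constants are related
  by a time-abstracting simulation, since every atom compares one clock with a bound at most its
  maximal constant. Finiteness holds because the constraints confine the parameters to the box
  [lb, ub] and the extrapolated bounds take only finitely many values.\<close>

section \<open>Difference bounds\<close>

datatype dbound = Unbounded | Bound int bool

instantiation dbound :: linorder
begin

fun less_eq_dbound :: "dbound \<Rightarrow> dbound \<Rightarrow> bool" where
  "less_eq_dbound _ Unbounded = True"
| "less_eq_dbound Unbounded (Bound _ _) = False"
| "less_eq_dbound (Bound a s) (Bound b t) = (a < b \<or> (a = b \<and> (s \<longrightarrow> t)))"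

definition less_dbound :: "dbound \<Rightarrow> dbound \<Rightarrow> bool" where
  "less_dbound x y = (x \<le> y \<and> \<not> y \<le> x)"

instance
proof
  fix x y z :: dbound
  show "(x < y) = (x \<le> y \<and> \<not> y \<le> x)" by (simp add: less_dbound_def)
  show "x \<le> x" by (cases x) auto
  show "x \<le> y \<Longrightarrow> y \<le> z \<Longrightarrow> x \<le> z" by (cases x; cases y; cases z) auto
  show "x \<le> y \<Longrightarrow> y \<le> x \<Longrightarrow> x = y" by (cases x; cases y) auto
  show "x \<le> y \<or> y \<le> x" by (cases x; cases y) auto
qed

end

instantiation dbound :: ordered_comm_monoid_add
begin

definition zero_dbound :: dbound where
  "zero_dbound = Bound 0 True"

fun plus_dbound :: "dbound \<Rightarrow> dbound \<Rightarrow> dbound" where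
  "plus_dbound (Bound a s) (Bound b t) = Bound (a + b) (s \<and> t)"
| "plus_dbound _ _ = Unbounded"

instance
proof
  fix a b c :: dbound
  show "a + b + c = a + (b + c)" by (cases a; cases b; cases c) auto
  show "a + b = b + a" by (cases a; cases b) auto
  show "0 + a = a" by (cases a) (auto simp: zero_dbound_def)
  show "a \<le> b \<Longrightarrow> c + a \<le> c + b" by (cases a; cases b; cases c) auto
qed

end

lemma le_add_nonneg: "0 \<le> (b::dbound) \<Longrightarrow> a \<le> a + b"
  by (metis add_left_mono add_0_right)

lemma le_min_add_min:
  fixes a b c d e :: dbound
  assumes "e \<le> a + c" "e \<le> a + d" "e \<le> b + c" "e \<le> b + d"
  shows "e \<le> min a b + min c d"
  using assms by (simp add: min_def)

lemma nonpos_dbound: "x \<le> 0 \<Longrightarrow> \<exists>c s. x = Bound c s \<and> c \<le> 0"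
  by (cases x) (auto simp: zero_dbound_def)

fun dsat :: "dbound \<Rightarrow> real \<Rightarrow> bool" where
  "dsat Unbounded d = True"
| "dsat (Bound c s) d = (if s then d \<le> real_of_int c else d < real_of_int c)"

lemma dsat_mono: "a \<le> b \<Longrightarrow> dsat a d \<Longrightarrow> dsat b d"
  by (cases a; cases b) (auto split: if_splits)

lemma dsat_zero: "dsat a 0 \<longleftrightarrow> 0 \<le> a"
  by (cases a) (auto simp: zero_dbound_def)

type_synonym dmat = "nat \<Rightarrow> nat \<Rightarrow> dbound"

definition tighten :: "dmat \<Rightarrow> nat \<Rightarrow> nat \<Rightarrow> dbound \<Rightarrow> dmat" where
  "tighten X i j b = X(i := (X i)(j := min (X i j) b))"

lemma tighten_le: "tighten X i j b \<le> X"
  by (auto simp: tighten_def le_fun_def)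

lemma foldl_tighten_le: "foldl (\<lambda>X a. tighten X (I a) (J a) (g a X)) X as \<le> X"
proof (induction as arbitrary: X)
  case (Cons a as)
  then show ?case using tighten_le by (simp, meson order_trans)
qed simp

section \<open>Parametric DBMs under a parameter valuation\<close>

definition eval_bnd :: "'p::finite pval \<Rightarrow> 'p bnd \<Rightarrow> dbound" where
  "eval_bnd v b = (case fst b of None \<Rightarrow> Unbounded | Some e \<Rightarrow> Bound (ev v e) (snd b))"

definition eval_dbm :: "'p::finite pval \<Rightarrow> 'p dbm \<Rightarrow> dmat" where
  "eval_dbm v D = (\<lambda>i j. eval_bnd v (D i j))"

lemma sat_bnd_iff_dsat: "sat_bnd v d b \<longleftrightarrow> dsat (eval_bnd v b) d"
  by (auto simp: sat_bnd_def eval_bnd_def sat_bound_def split: option.splits)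

definition solves :: "nat \<Rightarrow> dmat \<Rightarrow> clockval \<Rightarrow> bool" where
  "solves n X \<eta> \<longleftrightarrow> \<eta> 0 = 0 \<and> (\<forall>i. 0 \<le> \<eta> i) \<and> (\<forall>i\<le>n. \<forall>j\<le>n. dsat (X i j) (\<eta> i - \<eta> j))"

lemma zone_iff_solves: "(v, \<eta>) \<in> zone n C D \<longleftrightarrow> v \<in> csem C \<and> solves n (eval_dbm v D) \<eta>"
  by (simp add: zone_def solves_def sat_bnd_iff_dsat eval_dbm_def)

lemma ev_add_e: "ev v (add_e e e') = ev v e + ev v e'"
  by (simp add: ev_def add_e_def algebra_simps sum.distrib)

lemma ev_neg_e: "ev v (neg_e e) = - ev v e"
  by (simp add: ev_def neg_e_def sum_negf)

lemma ev_const_e [simp]: "ev v (const_e c) = c"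
  by (simp add: ev_def const_e_def)

lemma ev_var_e [simp]: "ev v (var_e p) = v p"
proof -
  have "(\<Sum>q\<in>UNIV. (if q = p then 1 else 0) * v q) = (\<Sum>q\<in>UNIV. if q = p then v q else 0)"
    by (rule sum.cong) auto
  then show ?thesis by (simp add: ev_def var_e_def)
qed

lemma eval_bnd_add_bnd: "eval_bnd v (add_bnd b b') = eval_bnd v b + eval_bnd v b'"
  by (cases "fst b"; cases "fst b'") (auto simp: eval_bnd_def add_bnd_def ev_add_e)

lemma csem_antimono: "C \<subseteq> C' \<Longrightarrow> csem C' \<subseteq> csem C"
  by (auto simp: csem_def)

lemma sat_neg_c: "sat_c v (neg_c c) \<longleftrightarrow> \<not> sat_c v c"
  by (auto simp: sat_c_def neg_c_def split: prod.splits)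

lemma eval_upd_dbm: "eval_dbm v (upd_dbm D i j b) = (eval_dbm v D)(i := (eval_dbm v D i)(j := eval_bnd v b))"
  by (simp add: eval_dbm_def upd_dbm_def fun_eq_iff)

lemma eval_apply_bnd:
  assumes "(C', D') \<in> apply_bnd i j g (C, D)" "v \<in> csem C'"
  shows "eval_dbm v D' = tighten (eval_dbm v D) i j (eval_bnd v g)"
proof (cases "fst g")
  case None
  then show ?thesis using assms by (auto simp: apply_bnd_def tighten_def eval_dbm_def eval_bnd_def fun_eq_iff)
next
  case (Some e)
  show ?thesis
  proof (cases "fst (D i j)")
    case None
    then show ?thesis using assms Some
      by (auto simp: apply_bnd_def tighten_def eval_upd_dbm) (simp add: eval_dbm_def eval_bnd_def)
  next
    case (Some eij)
    define c where "c = (eij, (snd (D i j) \<longrightarrow> snd g), e)"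
    have le_iff: "eval_dbm v D i j \<le> eval_bnd v g \<longleftrightarrow> sat_c v c"
      using Some \<open>fst g = Some e\<close> by (auto simp: c_def sat_c_def eval_dbm_def eval_bnd_def)
    have "sat_c v c \<and> D' = D \<or> \<not> sat_c v c \<and> D' = upd_dbm D i j g"
      using assms Some \<open>fst g = Some e\<close>
      by (auto simp: apply_bnd_def Let_def c_def[symmetric] entails_def csem_def sat_neg_c split: if_splits)
    then show ?thesis
      using le_iff by (auto simp: tighten_def eval_upd_dbm min_def)
  qed
qed

lemma apply_bnd_mono: "(C', D') \<in> apply_bnd i j g (C, D) \<Longrightarrow> C \<subseteq> C'"
  by (auto simp: apply_bnd_def Let_def split: option.splits if_splits)

lemma foldl_apply_bnd:
  assumes "(C', D') \<in> foldl (\<lambda>S a. \<Union>x\<in>S. apply_bnd (I a) (J a) (G a (snd x)) x) S0 as"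
    and "\<And>v a D. eval_bnd v (G a D) = g v a (eval_dbm v D)"
  shows "\<exists>C D. (C, D) \<in> S0 \<and> C \<subseteq> C' \<and>
    (\<forall>v \<in> csem C'. eval_dbm v D' = foldl (\<lambda>X a. tighten X (I a) (J a) (g v a X)) (eval_dbm v D) as)"
  using assms(1)
proof (induction as arbitrary: S0)
  case (Cons a as)
  then obtain C1 D1 where 1: "(C1, D1) \<in> (\<Union>x\<in>S0. apply_bnd (I a) (J a) (G a (snd x)) x)" "C1 \<subseteq> C'"
      "\<forall>v \<in> csem C'. eval_dbm v D' = foldl (\<lambda>X a. tighten X (I a) (J a) (g v a X)) (eval_dbm v D1) as"
    by fastforce
  then obtain C D where 2: "(C, D) \<in> S0" "(C1, D1) \<in> apply_bnd (I a) (J a) (G a D) (C, D)"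
    by auto
  have "eval_dbm v D1 = tighten (eval_dbm v D) (I a) (J a) (g v a (eval_dbm v D))" if "v \<in> csem C'" for v
    using eval_apply_bnd[OF 2(2)] csem_antimono[OF 1(2)] that assms(2) by auto
  then show ?case using 1 2 apply_bnd_mono[OF 2(2)] by (intro exI[of _ C] exI[of _ D]) auto
next
  case Nil
  then show ?case by (intro exI[of _ C'] exI[of _ D']) simp
qed

definition guard_step :: "'p::finite pval \<Rightarrow> dmat \<Rightarrow> 'p atom \<Rightarrow> dmat" where
  "guard_step v X a = (case a of (i, j, b, e) \<Rightarrow> tighten X i j (Bound (ev v e) b))"

definition guard_mat :: "'p::finite pval \<Rightarrow> 'p guard \<Rightarrow> dmat \<Rightarrow> dmat" where
  "guard_mat v g X = foldl (guard_step v) X g"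

lemma guard_step_eq: "guard_step v = (\<lambda>X a. tighten X (fst a) (fst (snd a)) (Bound (ev v (snd (snd (snd a)))) (fst (snd (snd a)))))"
  by (simp add: fun_eq_iff guard_step_def split_def)

definition fw_order :: "nat \<Rightarrow> (nat \<times> nat \<times> nat) list" where
  "fw_order n = [(k, i, j). k \<leftarrow> [0..<Suc n], i \<leftarrow> [0..<Suc n], j \<leftarrow> [0..<Suc n]]"

definition fw_step :: "dmat \<Rightarrow> nat \<times> nat \<times> nat \<Rightarrow> dmat" where
  "fw_step X a = (case a of (k, i, j) \<Rightarrow> tighten X i j (X i k + X k j))"

definition fw :: "nat \<Rightarrow> dmat \<Rightarrow> dmat" where
  "fw n X = foldl fw_step X (fw_order n)"

lemma fw_step_eq: "fw_step = (\<lambda>X a. tighten X (fst (snd a)) (snd (snd a)) (X (fst (snd a)) (fst a) + X (fst a) (snd (snd a))))"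
  by (simp add: fun_eq_iff fw_step_def split_def)

lemma eval_app_guard:
  assumes "(C', D') \<in> app_guard g (C, D)"
  shows "C \<subseteq> C'" "v \<in> csem C' \<Longrightarrow> eval_dbm v D' = guard_mat v g (eval_dbm v D)"
proof -
  have "(C', D') \<in> foldl (\<lambda>S a. \<Union>x\<in>S. apply_bnd (fst a) (fst (snd a))
      ((\<lambda>a D. (Some (snd (snd (snd a))), fst (snd (snd a)))) a (snd x)) x) {(C, D)} g"
    using assms by (simp add: app_guard_def split_def)
  from foldl_apply_bnd[OF this, where g = "\<lambda>v a X. Bound (ev v (snd (snd (snd a)))) (fst (snd (snd a)))"]
  show "C \<subseteq> C'" "v \<in> csem C' \<Longrightarrow> eval_dbm v D' = guard_mat v g (eval_dbm v D)"
    by (auto simp: eval_bnd_def guard_mat_def guard_step_eq)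
qed

lemma eval_canon:
  assumes "(C', D') \<in> canon n (C, D)"
  shows "C \<subseteq> C'" "v \<in> csem C' \<Longrightarrow> eval_dbm v D' = fw n (eval_dbm v D)"
proof -
  have "(C', D') \<in> foldl (\<lambda>S a. \<Union>x\<in>S. apply_bnd (fst (snd a)) (snd (snd a))
      ((\<lambda>a D. add_bnd (D (fst (snd a)) (fst a)) (D (fst a) (snd (snd a)))) a (snd x)) x) {(C, D)} (fw_order n)"
    using assms by (simp add: canon_def fw_order_def split_def)
  from foldl_apply_bnd[OF this, where g = "\<lambda>v a X. X (fst (snd a)) (fst a) + X (fst a) (snd (snd a))"]
  show "C \<subseteq> C'" "v \<in> csem C' \<Longrightarrow> eval_dbm v D' = fw n (eval_dbm v D)"
    by (auto simp: eval_bnd_add_bnd eval_dbm_def fw_def fw_step_eq)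
qed

section \<open>Floyd--Warshall on matrices with a closed clock block\<close>

definition closed_on :: "nat set \<Rightarrow> dmat \<Rightarrow> bool" where
  "closed_on I X \<longleftrightarrow> (\<forall>i\<in>I. \<forall>j\<in>I. \<forall>k\<in>I. X i j \<le> X i k + X k j) \<and> (\<forall>i\<in>I. 0 \<le> X i i)"

lemma fw_le: "fw n X \<le> X"
  unfolding fw_def fw_step_eq by (rule foldl_tighten_le)

definition fw_pass :: "nat \<Rightarrow> dmat \<Rightarrow> nat \<Rightarrow> dmat" where
  "fw_pass n X k = foldl fw_step X [(k, i, j). i \<leftarrow> [0..<Suc n], j \<leftarrow> [0..<Suc n]]"

definition fw_stage :: "nat \<Rightarrow> dmat \<Rightarrow> nat \<Rightarrow> dmat" where
  "fw_stage n X m = foldl (fw_pass n) X [0..<m]"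

lemma fw_eq_fw_stage: "fw n X = fw_stage n X (Suc n)"
proof -
  define P where "P k = [(k, i, j). i \<leftarrow> [0..<Suc n], j \<leftarrow> [0..<Suc n]]" for k :: nat
  have foldl_concat: "foldl f Y (concat xss) = foldl (foldl f) Y xss"
    for f :: "dmat \<Rightarrow> nat \<times> nat \<times> nat \<Rightarrow> dmat" and Y xss
    by (induction xss arbitrary: Y) auto
  have "fw n X = foldl fw_step X (concat (map P [0..<Suc n]))"
    by (simp add: fw_def fw_order_def P_def[abs_def] del: upt_Suc)
  also have "\<dots> = foldl (\<lambda>Y k. foldl fw_step Y (P k)) X [0..<Suc n]"
    by (simp add: foldl_concat foldl_map del: upt_Suc)
  finally show ?thesis by (simp add: fw_stage_def fw_pass_def[abs_def] P_def del: upt_Suc)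
qed

lemma fw_stage_Suc: "fw_stage n X (Suc m) = fw_pass n (fw_stage n X m) m"
  by (simp add: fw_stage_def)

lemma fw_pass_le: "fw_pass n X k \<le> X"
  unfolding fw_pass_def fw_step_eq by (rule foldl_tighten_le)

lemma fw_stage_antimono: "m \<le> m' \<Longrightarrow> fw_stage n X m' \<le> fw_stage n X m"
proof (induction m' rule: dec_induct)
  case (step k)
  then show ?case using fw_pass_le by (metis fw_stage_Suc order_trans)
qed simp

text \<open>Row and column k do not change during pass k when X k k is nonnegative, so the pass
  performs all its updates simultaneously.\<close>

lemma fw_pass_eq:
  assumes "0 \<le> X k k"
  shows "fw_pass n X k = (\<lambda>i j. if i \<le> n \<and> j \<le> n then min (X i j) (X i k + X k j) else X i j)"
proof -
  have gen: "foldl fw_step X (map (\<lambda>(i, j). (k, i, j)) ps) =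
      (\<lambda>i j. if (i, j) \<in> set ps then min (X i j) (X i k + X k j) else X i j)" for ps
  proof (induction ps rule: rev_induct)
    case (snoc p ps)
    obtain a b where p: "p = (a, b)" by (cases p)
    let ?Y = "\<lambda>i j. if (i, j) \<in> set ps then min (X i j) (X i k + X k j) else X i j"
    have rk: "?Y i k = X i k" and ck: "?Y k j = X k j" for i j
      using le_add_nonneg[OF assms] by (auto simp: min_def add.commute)
    have "foldl fw_step X (map (\<lambda>(i, j). (k, i, j)) (ps @ [p])) = fw_step ?Y (k, a, b)"
      using snoc.IH by (simp add: p)
    also have "\<dots> = ?Y(a := (?Y a)(b := min (?Y a b) (X a k + X k b)))"
      by (simp only: fw_step_def tighten_def rk ck prod.case)
    also have "\<dots> = (\<lambda>i j. if (i, j) \<in> set (ps @ [p]) then min (X i j) (X i k + X k j) else X i j)"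
      by (rule ext)+ (auto simp: p min_def)
    finally show ?case .
  qed simp
  define L where "L = [(i, j). i \<leftarrow> [0..<Suc n], j \<leftarrow> [0..<Suc n]]"
  have L: "[(k, i, j). i \<leftarrow> [0..<Suc n], j \<leftarrow> [0..<Suc n]] = map (\<lambda>(i, j). (k, i, j)) L"
    by (simp add: L_def map_concat comp_def del: upt_Suc)
  have mem: "(i, j) \<in> set L \<longleftrightarrow> i \<le> n \<and> j \<le> n" for i j
    unfolding L_def by (auto simp del: upt_Suc simp: less_Suc_eq_le image_iff)
  show ?thesis unfolding fw_pass_def L gen by (simp only: mem)
qed

lemma fw_pass_00: "fw_pass n X k 0 0 \<le> X 0 k + X k 0"
proof -
  have "[0..<Suc n] = 0 # [Suc 0..<Suc n]" by (rule upt_conv_Cons) simp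
  then obtain rest where "[(k, i, j). i \<leftarrow> [0..<Suc n], j \<leftarrow> [0..<Suc n]] = (k, 0, 0) # rest"
    by (simp del: upt_Suc)
  then have "fw_pass n X k = foldl fw_step (fw_step X (k, 0, 0)) rest"
    by (simp add: fw_pass_def del: upt_Suc)
  moreover have "foldl fw_step Y rest \<le> Y" for Y
    unfolding fw_step_eq by (rule foldl_tighten_le)
  ultimately have "fw_pass n X k 0 0 \<le> fw_step X (k, 0, 0) 0 0"
    by (metis le_funD)
  then show ?thesis by (simp add: fw_step_def tighten_def)
qed

lemma fw_00_le_cycle:
  assumes "m \<le> a" "a \<le> n"
  shows "fw n X 0 0 \<le> fw_stage n X m 0 a + fw_stage n X m a 0"
proof -
  have "fw n X 0 0 \<le> fw_stage n X (Suc a) 0 0"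
    using fw_stage_antimono[of "Suc a" "Suc n"] assms by (simp add: fw_eq_fw_stage le_fun_def)
  also have "\<dots> \<le> fw_stage n X a 0 a + fw_stage n X a a 0"
    using fw_pass_00 by (simp add: fw_stage_Suc)
  also have "\<dots> \<le> fw_stage n X m 0 a + fw_stage n X m a 0"
    using fw_stage_antimono[OF assms(1)] by (intro add_mono) (auto simp: le_fun_def)
  finally show ?thesis .
qed

lemma fw_pass_triangle:
  assumes k: "k \<le> n" and diag: "\<And>i. i \<le> n \<Longrightarrow> 0 \<le> X i i"
    and tri: "\<And>i j q. i \<le> n \<Longrightarrow> j \<le> n \<Longrightarrow> q < k \<Longrightarrow> X i j \<le> X i q + X q j"
    and ij: "i \<le> n" "j \<le> n" "q \<le> k"
  shows "fw_pass n X k i j \<le> fw_pass n X k i q + fw_pass n X k q j"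
proof -
  have kk: "0 \<le> X k k" using diag k by simp
  have q: "q \<le> n" using ij k by simp
  let ?e = "min (X i j) (X i k + X k j)"
  show ?thesis
  proof (cases "q = k")
    case True
    then show ?thesis
      using fw_pass_eq[of X k, OF kk] ij k le_add_nonneg[OF kk] by (simp add: min_def add.commute)
  next
    case False
    then have qk: "q < k" using ij by simp
    have "?e \<le> X i q + X q j"
      using tri[OF ij(1,2) qk] by (meson min.coboundedI1)
    moreover have "?e \<le> X i q + (X q k + X k j)"
      using add_right_mono[OF tri[OF ij(1) k qk], of "X k j"] by (simp add: add.assoc min.coboundedI2)
    moreover have "?e \<le> (X i k + X k q) + X q j"
      using add_left_mono[OF tri[OF k ij(2) qk], of "X i k"] by (simp add: add.assoc min.coboundedI2)
    moreover have "?e \<le> (X i k + X k q) + (X q k + X k j)"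
    proof -
      have "0 \<le> X k q + X q k" using tri[OF k k qk] kk by (meson order_trans)
      then have "X i k + X k j \<le> (X i k + (X k q + X q k)) + X k j"
        by (simp add: add_right_mono le_add_nonneg)
      then show ?thesis by (simp add: ac_simps min.coboundedI2)
    qed
    ultimately have "?e \<le> min (X i q) (X i k + X k q) + min (X q j) (X q k + X k j)"
      by (rule le_min_add_min)
    then show ?thesis using fw_pass_eq[of X k, OF kk] ij q by simp
  qed
qed

text \<open>This invariant of the passes is what lets a negative cycle through clock k be rerouted
  through the zero clock.\<close>

definition detour_bounded :: "nat \<Rightarrow> dmat \<Rightarrow> dmat \<Rightarrow> bool" where
  "detour_bounded n X Z \<longleftrightarrow> (\<forall>i\<in>{1..n}. \<forall>j\<in>{1..n}. min (X i j) (Z i 0 + Z 0 j) \<le> Z i j)"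

lemma detour_bounded_fw_pass:
  assumes X: "closed_on {1..n} X" and k: "k \<le> n" and kk: "0 \<le> Z k k"
    and Z: "detour_bounded n X Z"
  shows "detour_bounded n X (fw_pass n Z k)"
  unfolding detour_bounded_def
proof (intro ballI)
  fix i j assume i: "i \<in> {1..n}" and j: "j \<in> {1..n}"
  let ?Z = "fw_pass n Z k"
  have zi0: "?Z i 0 \<le> Z i 0" and z0j: "?Z 0 j \<le> Z 0 j"
    using fw_pass_le[of n Z k] by (auto simp: le_fun_def)
  have zij: "?Z i j = min (Z i j) (Z i k + Z k j)" using fw_pass_eq[of Z k, OF kk] i j by simp
  show "min (X i j) (?Z i 0 + ?Z 0 j) \<le> ?Z i j"
  proof (cases "Z i j \<le> Z i k + Z k j")
    case True
    then have "?Z i j = Z i j" using zij by (simp add: min_def)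
    moreover have "min (X i j) (?Z i 0 + ?Z 0 j) \<le> min (X i j) (Z i 0 + Z 0 j)"
      using zi0 z0j by (intro min.mono add_mono) auto
    moreover have "min (X i j) (Z i 0 + Z 0 j) \<le> Z i j"
      using Z i j by (simp add: detour_bounded_def)
    ultimately show ?thesis by (metis order_trans)
  next
    case False
    then have zv: "?Z i j = Z i k + Z k j" using zij by (simp add: min_def)
    show ?thesis
    proof (cases "k = 0")
      case True
      then show ?thesis using zv add_mono[OF zi0 z0j] by (simp add: min.coboundedI2)
    next
      case False
      then have "k \<in> {1..n}" using k by simp
      then have "min (X i k) (Z i 0 + Z 0 k) \<le> Z i k" "min (X k j) (Z k 0 + Z 0 j) \<le> Z k j"
        using Z i j by (auto simp: detour_bounded_def)
      then consider "X i k \<le> Z i k" "X k j \<le> Z k j" | "Z i 0 + Z 0 k \<le> Z i k" | "Z k 0 + Z 0 j \<le> Z k j"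
        by (auto simp: min_def split: if_splits)
      then show ?thesis
      proof cases
        case 1
        have "X i j \<le> X i k + X k j" using X i j \<open>k \<in> {1..n}\<close> by (simp add: closed_on_def)
        also have "\<dots> \<le> Z i k + Z k j" using 1 by (rule add_mono)
        finally show ?thesis using zv by (simp add: min.coboundedI1)
      next
        case 2
        have "?Z 0 j \<le> Z 0 k + Z k j" using fw_pass_eq[of Z k, OF kk] j k by simp
        with zi0 have "?Z i 0 + ?Z 0 j \<le> Z i 0 + (Z 0 k + Z k j)" by (rule add_mono)
        also have "\<dots> = (Z i 0 + Z 0 k) + Z k j" by (simp add: add.assoc)
        also have "\<dots> \<le> Z i k + Z k j" using 2 by (rule add_right_mono)
        finally show ?thesis using zv by (simp add: min.coboundedI2)
      next
        case 3
        have "?Z i 0 \<le> Z i k + Z k 0" using fw_pass_eq[of Z k, OF kk] i k by simp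
        then have "?Z i 0 + ?Z 0 j \<le> (Z i k + Z k 0) + Z 0 j" using z0j by (rule add_mono)
        also have "\<dots> = Z i k + (Z k 0 + Z 0 j)" by (simp add: add.assoc)
        also have "\<dots> \<le> Z i k + Z k j" using 3 by (rule add_left_mono)
        finally show ?thesis using zv by (simp add: min.coboundedI2)
      qed
    qed
  qed
qed

lemma fw_stage_cycle_via_zero_nonneg:
  assumes Y: "\<not> fw n X 0 0 < 0" and k: "k \<le> n" and i: "i \<le> n" "i \<noteq> k"
    and kk: "0 \<le> fw_stage n X k k k"
    and tri: "\<And>i j q. i \<le> n \<Longrightarrow> j \<le> n \<Longrightarrow> q < k \<Longrightarrow>
      fw_stage n X k i j \<le> fw_stage n X k i q + fw_stage n X k q j"
  shows "0 \<le> fw_stage n X k i 0 + (fw_stage n X k 0 k + fw_stage n X k k i)"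
    and "0 \<le> fw_stage n X k i k + (fw_stage n X k k 0 + fw_stage n X k 0 i)"
proof -
  let ?Z = "fw_stage n X k" and ?Z' = "fw_stage n X (Suc k)"
  have cyc: "0 \<le> fw_stage n X m 0 a + fw_stage n X m a 0" if "m \<le> a" "a \<le> n" for m a
    using fw_00_le_cycle[OF that, of X] Y by (meson order_trans not_le)
  have Z': "?Z' = fw_pass n ?Z k" by (rule fw_stage_Suc)
  show "0 \<le> ?Z i 0 + (?Z 0 k + ?Z k i)"
  proof (cases "i < k")
    case True
    have "0 \<le> ?Z 0 k + ?Z k 0" using cyc[of k k] k by simp
    also have "\<dots> \<le> ?Z 0 k + (?Z k i + ?Z i 0)"
      using tri[of k 0 i] True k by (simp add: add_left_mono)
    finally show ?thesis by (simp add: ac_simps)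
  next
    case False
    then have "Suc k \<le> i" using i by simp
    then have "0 \<le> ?Z' 0 i + ?Z' i 0" using cyc i by simp
    also have "\<dots> \<le> (?Z 0 k + ?Z k i) + ?Z i 0"
      using fw_pass_eq[of ?Z k, OF kk] Z' i k by (intro add_mono) auto
    finally show ?thesis by (simp add: ac_simps)
  qed
  show "0 \<le> ?Z i k + (?Z k 0 + ?Z 0 i)"
  proof (cases "i < k")
    case True
    have "0 \<le> ?Z 0 k + ?Z k 0" using cyc[of k k] k by simp
    also have "\<dots> \<le> (?Z 0 i + ?Z i k) + ?Z k 0"
      using tri[of 0 k i] True k by (simp add: add_right_mono)
    finally show ?thesis by (simp add: ac_simps)
  next
    case False
    then have "Suc k \<le> i" using i by simp
    then have "0 \<le> ?Z' 0 i + ?Z' i 0" using cyc i by simp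
    also have "\<dots> \<le> ?Z 0 i + (?Z i k + ?Z k 0)"
      using fw_pass_eq[of ?Z k, OF kk] Z' i k by (intro add_mono) auto
    finally show ?thesis by (simp add: ac_simps)
  qed
qed

lemma fw_stage_cycle_nonneg:
  assumes X: "closed_on {1..n} X" and k: "k \<le> n" and Y: "\<not> fw n X 0 0 < 0"
    and diag: "\<And>i. i \<le> n \<Longrightarrow> 0 \<le> fw_stage n X k i i"
    and tri: "\<And>i j q. i \<le> n \<Longrightarrow> j \<le> n \<Longrightarrow> q < k \<Longrightarrow>
      fw_stage n X k i j \<le> fw_stage n X k i q + fw_stage n X k q j"
    and detour: "detour_bounded n X (fw_stage n X k)"
    and i: "i \<le> n"
  shows "0 \<le> fw_stage n X k i k + fw_stage n X k k i"
proof -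
  let ?Z = "fw_stage n X k"
  have kk: "0 \<le> ?Z k k" using diag k by simp
  have cyc: "0 \<le> ?Z 0 a + ?Z a 0" if "k \<le> a" "a \<le> n" for a
    using fw_00_le_cycle[OF that, of X] Y by (meson order_trans not_le)
  consider "i = k" | "k = 0" | "i = 0" | "i \<in> {1..n}" "k \<in> {1..n}" "i \<noteq> k"
    using i k by fastforce
  then show ?thesis
  proof cases
    case 1
    then show ?thesis using add_mono[OF kk kk] by simp
  next
    case 2
    then show ?thesis using cyc[of i] i by (simp add: add.commute)
  next
    case 3
    then show ?thesis using cyc[of k] k by simp
  next
    case 4
    have "min (X i k) (?Z i 0 + ?Z 0 k) \<le> ?Z i k" "min (X k i) (?Z k 0 + ?Z 0 i) \<le> ?Z k i"
      using detour 4 by (auto simp: detour_bounded_def)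
    then consider "X i k \<le> ?Z i k" "X k i \<le> ?Z k i" | "?Z i 0 + ?Z 0 k \<le> ?Z i k"
      | "?Z k 0 + ?Z 0 i \<le> ?Z k i"
      by (auto simp: min_def split: if_splits)
    then show ?thesis
    proof cases
      case 1
      have "0 \<le> X i i" using X 4 by (simp add: closed_on_def)
      also have "\<dots> \<le> X i k + X k i" using X 4 by (simp add: closed_on_def)
      also have "\<dots> \<le> ?Z i k + ?Z k i" using 1 by (rule add_mono)
      finally show ?thesis .
    next
      case 2
      have "0 \<le> ?Z i 0 + (?Z 0 k + ?Z k i)"
        using fw_stage_cycle_via_zero_nonneg(1)[OF Y k i 4(3) kk tri] by blast
      also have "\<dots> \<le> ?Z i k + ?Z k i" using add_right_mono[OF 2, of "?Z k i"] by (simp add: add.assoc)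
      finally show ?thesis .
    next
      case 3
      have "0 \<le> ?Z i k + (?Z k 0 + ?Z 0 i)"
        using fw_stage_cycle_via_zero_nonneg(2)[OF Y k i 4(3) kk tri] by blast
      also have "\<dots> \<le> ?Z i k + ?Z k i" using add_left_mono[OF 3] by simp
      finally show ?thesis .
    qed
  qed
qed

text \<open>A negative cycle that would break the invariant of the passes yields a negative entry at (0, 0).\<close>

theorem fw_closed:
  assumes X: "closed_on {1..n} X"
  shows "fw n X 0 0 < 0 \<or> closed_on {..n} (fw n X)"
proof (cases "fw n X 0 0 < 0")
  case Y: False
  define Inv where "Inv m \<longleftrightarrow> (\<forall>i\<le>n. 0 \<le> fw_stage n X m i i) \<and>
      (\<forall>i\<le>n. \<forall>j\<le>n. \<forall>q<m. fw_stage n X m i j \<le> fw_stage n X m i q + fw_stage n X m q j) \<and>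
      detour_bounded n X (fw_stage n X m)" for m
  have "Inv m" if "m \<le> Suc n" for m
    using that
  proof (induction m)
    case 0
    have "0 \<le> X 0 0"
      using Y fw_le[of n X] by (auto simp: le_fun_def not_less intro: order_trans)
    then have "0 \<le> X i i" if "i \<le> n" for i
      using X that by (cases "i = 0") (auto simp: closed_on_def)
    then show ?case by (auto simp: Inv_def fw_stage_def detour_bounded_def min.coboundedI1)
  next
    case (Suc k)
    then have k: "k \<le> n" and "Inv k" by simp_all
    then have diag: "\<And>i. i \<le> n \<Longrightarrow> 0 \<le> fw_stage n X k i i"
      and tri: "\<And>i j q. i \<le> n \<Longrightarrow> j \<le> n \<Longrightarrow> q < k \<Longrightarrow>
        fw_stage n X k i j \<le> fw_stage n X k i q + fw_stage n X k q j"
      and det: "detour_bounded n X (fw_stage n X k)"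
      by (auto simp: Inv_def)
    have kk: "0 \<le> fw_stage n X k k k" using diag k by simp
    have "0 \<le> fw_pass n (fw_stage n X k) k i i" if "i \<le> n" for i
      using fw_stage_cycle_nonneg[OF X k Y diag tri det that] diag[OF that]
        fw_pass_eq[of "fw_stage n X k" k, OF kk] that by simp
    moreover have "fw_pass n (fw_stage n X k) k i j \<le>
        fw_pass n (fw_stage n X k) k i q + fw_pass n (fw_stage n X k) k q j"
      if "i \<le> n" "j \<le> n" "q < Suc k" for i j q
      using fw_pass_triangle[OF k diag tri that(1,2)] that(3) by simp
    moreover have "detour_bounded n X (fw_pass n (fw_stage n X k) k)"
      by (rule detour_bounded_fw_pass[OF X k kk det])
    ultimately show ?case by (simp add: Inv_def fw_stage_Suc)
  qed
  then have "Inv (Suc n)" by simp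
  then have "closed_on {..n} (fw n X)"
    by (auto simp: Inv_def closed_on_def fw_eq_fw_stage less_Suc_eq_le)
  then show ?thesis ..
qed simp

section \<open>Invariants of the reachable symbolic states\<close>

definition pre_canonical :: "nat \<Rightarrow> dmat \<Rightarrow> bool" where
  "pre_canonical n X \<longleftrightarrow> (\<forall>k\<le>n. X 0 k \<le> 0) \<and> (X 0 0 < 0 \<or> closed_on {1..n} X)"

definition canonical :: "nat \<Rightarrow> dmat \<Rightarrow> bool" where
  "canonical n X \<longleftrightarrow> (\<forall>k\<le>n. X 0 k \<le> 0) \<and> (X 0 0 < 0 \<or> closed_on {..n} X)"

lemma canonical_imp_pre_canonical: "canonical n X \<Longrightarrow> pre_canonical n X"
  by (auto simp: canonical_def pre_canonical_def closed_on_def)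

lemma pre_canonical_fw: "pre_canonical n X \<Longrightarrow> canonical n (fw n X)"
  using fw_closed[of n X] fw_le[of n X]
  by (fastforce simp: pre_canonical_def canonical_def le_fun_def intro: order_trans le_less_trans)

lemma guard_mat_le: "guard_mat v g X \<le> X"
  unfolding guard_mat_def guard_step_eq by (rule foldl_tighten_le)

lemma guard_mat_cases:
  "guard_mat v g X i j = X i j \<or> (\<exists>b e. (i, j, b, e) \<in> set g \<and> guard_mat v g X i j = Bound (ev v e) b)"
proof (induction g arbitrary: X)
  case (Cons a g)
  obtain i' j' b e where a: "a = (i', j', b, e)" by (cases a)
  let ?T = "tighten X i' j' (Bound (ev v e) b)"
  have gm: "guard_mat v (a # g) X i j = guard_mat v g ?T i j"
    by (simp add: guard_mat_def guard_step_def a)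
  consider "guard_mat v g ?T i j = ?T i j"
    | b' e' where "(i, j, b', e') \<in> set g" "guard_mat v g ?T i j = Bound (ev v e') b'"
    using Cons.IH by blast
  then show ?case
  proof cases
    case 1
    show ?thesis
    proof (cases "(i, j) = (i', j') \<and> ?T i j \<noteq> X i j")
      case True
      then have "?T i j = Bound (ev v e) b" by (auto simp: tighten_def min_def)
      then show ?thesis using 1 gm True a by (intro disjI2 exI[of _ b] exI[of _ e]) auto
    next
      case False
      then have "?T i j = X i j" by (auto simp: tighten_def)
      then show ?thesis using 1 gm by simp
    qed
  next
    case 2
    then show ?thesis using gm by (intro disjI2 exI[of _ b'] exI[of _ e']) simp
  qed
qed (simp add: guard_mat_def)

lemma guard_mat_clock_block:
  assumes "simple_guard g" "1 \<le> i" "1 \<le> j"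
  shows "guard_mat v g X i j = X i j"
  using guard_mat_cases[of v g X i j] assms by (fastforce simp: simple_guard_def)

lemma pre_canonical_guard_mat:
  assumes "simple_guard g" "pre_canonical n X"
  shows "pre_canonical n (guard_mat v g X)"
proof -
  have le: "guard_mat v g X i j \<le> X i j" for i j
    using guard_mat_le[of v g X] by (simp add: le_fun_def)
  have "closed_on {1..n} (guard_mat v g X) \<longleftrightarrow> closed_on {1..n} X"
    using guard_mat_clock_block[OF assms(1)] by (simp add: closed_on_def)
  then show ?thesis using assms(2) le by (auto simp: pre_canonical_def intro: order_trans le_less_trans)
qed

definition up_reset :: "nat set \<Rightarrow> dmat \<Rightarrow> dmat" where
  "up_reset R X = (\<lambda>i j. if i \<noteq> 0 \<and> j = 0 then Unbounded else X (if i \<in> R then 0 else i) (if j \<in> R then 0 else j))"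

lemma eval_up_reset_dbm: "eval_dbm v (up (reset_dbm R D)) = up_reset R (eval_dbm v D)"
  by (auto intro!: ext simp: eval_dbm_def up_def reset_dbm_def up_reset_def eval_bnd_def)

lemma closed_up_reset:
  assumes "closed_on {..n} X" "R \<subseteq> {0..n}"
  shows "closed_on {..n} (up_reset R X)"
proof -
  let ?r = "\<lambda>i. if i \<in> R then 0 else i"
  have r: "i \<le> n \<Longrightarrow> ?r i \<le> n" for i by auto
  have t: "X (?r i) (?r j) \<le> X (?r i) (?r k) + X (?r k) (?r j)" if "i \<le> n" "j \<le> n" "k \<le> n" for i j k
    using assms(1) r that unfolding closed_on_def by blast
  have "up_reset R X i j \<le> up_reset R X i k + up_reset R X k j" if "i \<le> n" "j \<le> n" "k \<le> n" for i j k
    using t[OF that] by (cases "k = 0") (auto simp: up_reset_def)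
  moreover have "0 \<le> up_reset R X i i" if "i \<le> n" for i
    using assms(1) r[OF that] by (auto simp: up_reset_def closed_on_def)
  ultimately show ?thesis by (simp add: closed_on_def)
qed

lemma canonical_up_reset:
  assumes "canonical n X" "R \<subseteq> {0..n}"
  shows "pre_canonical n (up_reset R X)"
proof -
  have "canonical n (up_reset R X)"
    using assms closed_up_reset[OF _ assms(2), of X] by (auto simp: canonical_def up_reset_def)
  then show ?thesis by (rule canonical_imp_pre_canonical)
qed

lemma wf_trans:
  assumes "wf_ptba A" "(l, g, R, l') \<in> trans (fst A)"
  shows "l' \<in> locs (fst A)" "simple_guard g" "guard_clocks (nclk (fst A)) g" "R \<subseteq> {0..nclk (fst A)}"
  using assms by (auto simp: wf_ptba_def Let_def)

lemma wf_inv: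
  assumes "wf_ptba A" "l \<in> locs (fst A)"
  shows "simple_guard (inv (fst A) l)" "guard_clocks (nclk (fst A)) (inv (fst A) l)"
  using assms by (auto simp: wf_ptba_def Let_def)

lemma wf_init: "wf_ptba A \<Longrightarrow> init (fst A) \<in> locs (fst A)"
  by (auto simp: wf_ptba_def Let_def)

lemma sym_step_canonical:
  assumes wf: "wf_ptba A" and step: "sym_step A (l, C, D) (l', C', D')"
    and pre: "\<forall>v \<in> csem C. pre_canonical (nclk (fst A)) (eval_dbm v D)"
  shows "l' \<in> locs (fst A) \<and> C \<subseteq> C' \<and> (\<forall>v \<in> csem C'. canonical (nclk (fst A)) (eval_dbm v D'))"
proof -
  let ?n = "nclk (fst A)"
  from step obtain g R C1 D1 C2 D2 C3 D3 where
    tr: "(l, g, R, l') \<in> trans (fst A)" and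
    s1: "(C1, D1) \<in> app_guard g (C, D)" and
    s2: "(C2, D2) \<in> canon ?n (C1, D1)" and
    s3: "(C3, D3) \<in> app_guard (inv (fst A) l') (C2, up (reset_dbm R D2))" and
    s4: "(C', D') \<in> canon ?n (C3, D3)"
    by (auto simp: sym_step_def)
  note wt = wf_trans[OF wf tr]
  have sub: "C \<subseteq> C1" "C1 \<subseteq> C2" "C2 \<subseteq> C3" "C3 \<subseteq> C'"
    using eval_app_guard(1)[OF s1] eval_canon(1)[OF s2] eval_app_guard(1)[OF s3] eval_canon(1)[OF s4] .
  have "canonical ?n (eval_dbm v D')" if v: "v \<in> csem C'" for v
  proof -
    have v3: "v \<in> csem C3" and v2: "v \<in> csem C2" and v1: "v \<in> csem C1" and v0: "v \<in> csem C"
      using v csem_antimono[OF sub(4)] csem_antimono[OF sub(3)] csem_antimono[OF sub(2)]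
        csem_antimono[OF sub(1)] by blast+
    have "pre_canonical ?n (eval_dbm v D1)"
      using pre_canonical_guard_mat[OF wt(2)] pre v0 eval_app_guard(2)[OF s1 v1] by simp
    then have "canonical ?n (eval_dbm v D2)"
      using pre_canonical_fw eval_canon(2)[OF s2 v2] by simp
    then have "pre_canonical ?n (eval_dbm v D3)"
      using canonical_up_reset[OF _ wt(4)] pre_canonical_guard_mat[OF wf_inv(1)[OF wf wt(1)]]
        eval_app_guard(2)[OF s3 v3] by (simp add: eval_up_reset_dbm)
    then show ?thesis
      using pre_canonical_fw eval_canon(2)[OF s4 v] by simp
  qed
  then show ?thesis using wt(1) sub by blast
qed

lemma eval_up_E_dbm: "eval_dbm v (up E_dbm) = (\<lambda>i j. if i \<noteq> 0 \<and> j = 0 then Unbounded else 0)"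
  by (auto intro!: ext simp: eval_dbm_def up_def E_dbm_def eval_bnd_def zero_dbound_def)

lemma sym_init_pre_canonical:
  assumes wf: "wf_ptba A" and init: "(l, C, D) \<in> sym_init A lb ub"
  shows "l \<in> locs (fst A) \<and> C0 lb ub \<subseteq> C \<and> (\<forall>v \<in> csem C. pre_canonical (nclk (fst A)) (eval_dbm v D))"
proof -
  have l: "l = init (fst A)" and ag: "(C, D) \<in> app_guard (inv (fst A) l) (C0 lb ub, up E_dbm)"
    using init by (auto simp: sym_init_def)
  have base: "pre_canonical (nclk (fst A)) (eval_dbm v (up E_dbm))" for v
    by (auto simp: eval_up_E_dbm pre_canonical_def closed_on_def)
  have "pre_canonical (nclk (fst A)) (eval_dbm v D)" if "v \<in> csem C" for v
    using eval_app_guard(2)[OF ag that] pre_canonical_guard_mat[OF wf_inv(1)[OF wf wf_init[OF wf]] base] l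
    by simp
  then show ?thesis using wf_init[OF wf] eval_app_guard(1)[OF ag] l by auto
qed

lemma sym_reach_inv:
  assumes wf: "wf_ptba A" and reach: "(l, C, D) \<in> sym_reach A lb ub"
  shows "l \<in> locs (fst A) \<and> C0 lb ub \<subseteq> C \<and>
    ((l, C, D) \<in> sym_init A lb ub \<or> (\<forall>v \<in> csem C. canonical (nclk (fst A)) (eval_dbm v D)))"
proof -
  from reach obtain S0 where S0: "S0 \<in> sym_init A lb ub" "(S0, (l, C, D)) \<in> {(X, Y). sym_step A X Y}\<^sup>*"
    by (auto simp: sym_reach_def)
  have "case S of (l, C, D) \<Rightarrow> l \<in> locs (fst A) \<and> C0 lb ub \<subseteq> C \<and>
    (S \<in> sym_init A lb ub \<or> (\<forall>v \<in> csem C. canonical (nclk (fst A)) (eval_dbm v D)))"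
    if "(S0, S) \<in> {(X, Y). sym_step A X Y}\<^sup>*" for S
    using that
  proof (induction rule: rtrancl_induct)
    case base
    then show ?case using sym_init_pre_canonical[OF wf] S0(1) by (cases S0) auto
  next
    case (step T U)
    obtain l0 C0' D0 where T: "T = (l0, C0', D0)" by (cases T)
    obtain l' C' D' where U: "U = (l', C', D')" by (cases U)
    have "\<forall>v \<in> csem C0'. pre_canonical (nclk (fst A)) (eval_dbm v D0)" "C0 lb ub \<subseteq> C0'"
      using step.IH sym_init_pre_canonical[OF wf, of l0 C0' D0] canonical_imp_pre_canonical by (auto simp: T)
    then show ?case using sym_step_canonical[OF wf, of l0 C0' D0 l' C' D'] step.hyps(2) by (auto simp: T U)
  qed
  from this[OF S0(2)] show ?thesis by simp
qed

section \<open>The maximal constants and the induced time-abstracting simulation\<close>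

lemma csem_C0_bounds:
  assumes "v \<in> csem (C0 lb ub)"
  shows "lb p \<le> v p \<and> v p \<le> ub p"
proof -
  have "(const_e (lb p), True, var_e p) \<in> C0 lb ub" "(var_e p, True, const_e (ub p)) \<in> C0 lb ub"
    by (auto simp: C0_def)
  then show ?thesis using assms by (auto simp: csem_def sat_c_def)
qed

lemma ev_le_max_lu:
  assumes "\<And>p. lb p \<le> v p \<and> v p \<le> ub p"
  shows "ev v e \<le> max_lu lb ub e"
proof -
  have "snd e p * v p \<le> (if snd e p > 0 then snd e p * ub p else snd e p * lb p)" for p
    using assms[of p] by (auto simp: mult_left_mono mult_left_mono_neg)
  then show ?thesis unfolding ev_def max_lu_def by (intro add_left_mono sum_mono) auto
qed

lemma finite_cmp_exprs:
  assumes "wf_ptba A"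
  shows "finite (cmp_exprs A k)"
proof -
  have "{g. \<exists>l R l'. (l, g, R, l') \<in> trans (fst A)} = (\<lambda>(l, g, R, l'). g) ` trans (fst A)"
    by force
  then have "finite (all_guards A)"
    using assms by (auto simp: all_guards_def wf_ptba_def Let_def)
  moreover have "cmp_exprs A k \<subseteq> (\<Union>g \<in> all_guards A. (\<lambda>(i, j, b, e). e) ` set g \<union> (\<lambda>(i, j, b, e). neg_e e) ` set g)"
    by (force simp: cmp_exprs_def)
  ultimately show ?thesis by (auto intro: finite_subset)
qed

lemma ev_le_Mx:
  assumes "wf_ptba A" "e \<in> cmp_exprs A k" "v \<in> csem (C0 lb ub)"
  shows "ev v e \<le> Mx A lb ub k"
proof -
  have "ev v e \<le> max_lu lb ub e"
    using ev_le_max_lu csem_C0_bounds[OF assms(3)] by blast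
  also have "\<dots> \<le> Max (max_lu lb ub ` cmp_exprs A k)"
    using finite_cmp_exprs[OF assms(1)] assms(2) by (intro Max_ge) auto
  finally show ?thesis using assms(2) by (auto simp: Mx_def Let_def)
qed

lemma Mx_zero [simp]: "Mx A lb ub 0 = 0"
  by (simp add: Mx_def cmp_exprs_def)

lemma upper_atom_le_Mx:
  assumes "wf_ptba A" "g \<in> all_guards A" "(k, 0, b, e) \<in> set g" "k \<noteq> 0" "v \<in> csem (C0 lb ub)"
  shows "ev v e \<le> Mx A lb ub k"
proof -
  have "e \<in> cmp_exprs A k" unfolding cmp_exprs_def mem_Collect_eq using assms(2-4) by blast
  then show ?thesis using ev_le_Mx assms by blast
qed

lemma lower_atom_le_Mx:
  assumes "wf_ptba A" "g \<in> all_guards A" "(0, k, b, e) \<in> set g" "k \<noteq> 0" "v \<in> csem (C0 lb ub)"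
  shows "- ev v e \<le> Mx A lb ub k"
proof -
  have "neg_e e \<in> cmp_exprs A k" unfolding cmp_exprs_def mem_Collect_eq using assms(2-4) by blast
  from ev_le_Mx[OF assms(1) this assms(5)] show ?thesis by (simp add: ev_neg_e)
qed

definition agree_below :: "nat \<Rightarrow> (nat \<Rightarrow> int) \<Rightarrow> clockval \<Rightarrow> clockval \<Rightarrow> bool" where
  "agree_below n M \<eta> \<eta>' \<longleftrightarrow> \<eta> 0 = 0 \<and> \<eta>' 0 = 0 \<and>
     (\<forall>i \<in> {1..n}. \<eta> i = \<eta>' i \<or> (of_int (M i) < \<eta> i \<and> of_int (M i) < \<eta>' i))"

lemma agree_below_delay:
  "agree_below n M \<eta> \<eta>' \<Longrightarrow> 0 \<le> d \<Longrightarrow> agree_below n M (delay \<eta> d) (delay \<eta>' d)"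
  by (auto simp: agree_below_def delay_def)

lemma agree_below_reset:
  "agree_below n M \<eta> \<eta>' \<Longrightarrow> agree_below n M (reset \<eta> R) (reset \<eta>' R)"
  by (auto simp: agree_below_def reset_def)

lemma sat_guard_agree_below:
  assumes wf: "wf_ptba A" and v: "v \<in> csem (C0 lb ub)" and g: "g \<in> all_guards A"
    and gc: "guard_clocks (nclk (fst A)) g" and sg: "simple_guard g"
    and agree: "agree_below (nclk (fst A)) (Mx A lb ub) \<eta> \<eta>'"
  shows "sat_guard v \<eta> g \<longleftrightarrow> sat_guard v \<eta>' g"
proof -
  have "sat_bound b (\<eta> i - \<eta> j) (ev v e) \<longleftrightarrow> sat_bound b (\<eta>' i - \<eta>' j) (ev v e)"
    if a: "(i, j, b, e) \<in> set g" for i j b e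
  proof -
    have ij: "i = 0 \<or> j = 0" "i \<le> nclk (fst A)" "j \<le> nclk (fst A)"
      using a sg gc by (auto simp: simple_guard_def guard_clocks_def)
    have z: "\<eta> 0 = 0" "\<eta>' 0 = 0" using agree by (auto simp: agree_below_def)
    consider "i = 0" "j = 0" | "i = 0" "j \<in> {1..nclk (fst A)}" | "j = 0" "i \<in> {1..nclk (fst A)}"
      using ij by fastforce
    then show ?thesis
    proof cases
      case 1
      then show ?thesis using z by simp
    next
      case 2
      then have "- ev v e \<le> Mx A lb ub j" using lower_atom_le_Mx[OF wf g _ _ v] a by simp
      then have "- real_of_int (ev v e) \<le> real_of_int (Mx A lb ub j)" by linarith
      moreover have "\<eta> j = \<eta>' j \<or> (Mx A lb ub j < \<eta> j \<and> Mx A lb ub j < \<eta>' j)"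
        using agree 2 by (auto simp: agree_below_def)
      ultimately show ?thesis using 2 z by (auto simp: sat_bound_def)
    next
      case 3
      then have "ev v e \<le> Mx A lb ub i" using upper_atom_le_Mx[OF wf g _ _ v] a by simp
      then have "real_of_int (ev v e) \<le> real_of_int (Mx A lb ub i)" by linarith
      moreover have "\<eta> i = \<eta>' i \<or> (Mx A lb ub i < \<eta> i \<and> Mx A lb ub i < \<eta>' i)"
        using agree 3 by (auto simp: agree_below_def)
      ultimately show ?thesis using 3 z by (auto simp: sat_bound_def)
    qed
  qed
  then show ?thesis unfolding sat_guard_def by fast
qed

definition agree_rel :: "('l, 'p::finite) ptba \<Rightarrow> 'p pval \<Rightarrow> 'p pval \<Rightarrow> (('l \<times> clockval) \<times> ('l \<times> clockval)) set" where
  "agree_rel A lb ub = {((l, \<eta>), (l', \<eta>')). l = l' \<and> l \<in> locs (fst A) \<and> agree_below (nclk (fst A)) (Mx A lb ub) \<eta> \<eta>'}"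

lemma ta_simulation_agree_rel:
  assumes wf: "wf_ptba A" and v: "v \<in> csem (C0 lb ub)"
  shows "ta_simulation (fst A) v (agree_rel A lb ub)"
  unfolding ta_simulation_def
proof (intro allI impI conjI)
  fix s1 s2 assume rel: "(s1, s2) \<in> agree_rel A lb ub"
  obtain l \<eta> \<eta>' where s: "s1 = (l, \<eta>)" "s2 = (l, \<eta>')" and l: "l \<in> locs (fst A)"
    and agree: "agree_below (nclk (fst A)) (Mx A lb ub) \<eta> \<eta>'"
    using rel by (auto simp: agree_rel_def)
  show "fst s1 = fst s2" using s by simp
  show "\<exists>s2'. act_step (fst A) v s2 s2' \<and> (s1', s2') \<in> agree_rel A lb ub"
    if step: "act_step (fst A) v s1 s1'" for s1'
  proof -
    obtain l' \<rho> where s1': "s1' = (l', \<rho>)" by (cases s1')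
    obtain g R where t: "(l, g, R, l') \<in> trans (fst A)" "sat_guard v \<eta> g"
      "s1' = (l', reset \<eta> R)" "sat_guard v (reset \<eta> R) (inv (fst A) l')"
      using step by (auto simp: act_step_def s s1')
    note wt = wf_trans[OF wf t(1)]
    have "g \<in> all_guards A" "inv (fst A) l' \<in> all_guards A"
      using t(1) wt(1) by (auto simp: all_guards_def)
    then have "sat_guard v \<eta>' g" "sat_guard v (reset \<eta>' R) (inv (fst A) l')"
      using sat_guard_agree_below[OF wf v] wt wf_inv[OF wf wt(1)] agree agree_below_reset t
      by blast+
    then have "act_step (fst A) v s2 (l', reset \<eta>' R)"
      using t(1) by (auto simp: act_step_def s)
    moreover have "(s1', (l', reset \<eta>' R)) \<in> agree_rel A lb ub"
      using wt(1) agree_below_reset[OF agree] t(3) by (simp add: agree_rel_def)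
    ultimately show ?thesis by blast
  qed
  show "\<exists>s2'. delay_step (fst A) v s2 s2' \<and> (s1', s2') \<in> agree_rel A lb ub"
    if step: "delay_step (fst A) v s1 s1'" for s1'
  proof -
    obtain l' \<rho> where s1': "s1' = (l', \<rho>)" by (cases s1')
    obtain d where t: "0 \<le> d" "s1' = (l, delay \<eta> d)" "sat_guard v (delay \<eta> d) (inv (fst A) l)"
      using step by (auto simp: delay_step_def s s1')
    have "inv (fst A) l \<in> all_guards A" using l by (auto simp: all_guards_def)
    then have "sat_guard v (delay \<eta>' d) (inv (fst A) l)"
      using sat_guard_agree_below[OF wf v] wf_inv[OF wf l] agree_below_delay[OF agree t(1)] t(3)
      by blast
    then have "delay_step (fst A) v s2 (l, delay \<eta>' d)"
      using t(1) by (auto simp: delay_step_def s)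
    moreover have "(s1', (l, delay \<eta>' d)) \<in> agree_rel A lb ub"
      using l agree_below_delay[OF agree t(1)] t(2) by (simp add: agree_rel_def)
    ultimately show ?thesis by blast
  qed
qed

lemma sim_if_agree_below:
  assumes "wf_ptba A" "v \<in> csem (C0 lb ub)" "l \<in> locs (fst A)" "agree_below (nclk (fst A)) (Mx A lb ub) \<eta> \<eta>'"
  shows "sim (fst A) v (l, \<eta>) (l, \<eta>')"
  using ta_simulation_agree_rel[OF assms(1,2)] assms(3,4) by (auto simp: sim_def agree_rel_def)

section \<open>Soundness of the extrapolation\<close>

definition extrapolates :: "int \<Rightarrow> int \<Rightarrow> dbound \<Rightarrow> dbound \<Rightarrow> bool" where
  "extrapolates Mi Mj x x' \<longleftrightarrow> (x = Unbounded \<and> x' = Unbounded) \<or> (\<exists>c s. x = Bound c s \<and>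
     ((x' = x \<and> c \<le> Mi \<and> - Mj \<le> c) \<or> (x' = Unbounded \<and> Mi < c) \<or> (x' = Bound (- Mj) False \<and> c < - Mj)))"

lemma pk_ok_extrapolates:
  assumes "pk_ok A lb ub (C, D) (C', D')"
  shows "C \<subseteq> C'"
    and "v \<in> csem C' \<Longrightarrow> i \<le> nclk (fst A) \<Longrightarrow> j \<le> nclk (fst A) \<Longrightarrow>
      extrapolates (Mx A lb ub i) (Mx A lb ub j) (eval_dbm v D i j) (eval_dbm v D' i j)"
proof -
  let ?n = "nclk (fst A)" and ?M = "Mx A lb ub"
  obtain cs where C': "C' = C \<union> (\<Union>i \<in> {0..?n}. \<Union>j \<in> {0..?n}. cs i j)"
    and D': "\<forall>i \<le> ?n. \<forall>j \<le> ?n. (case fst (D i j) of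
             None \<Rightarrow> D' i j = D i j \<and> cs i j = {}
           | Some e \<Rightarrow>
               (D' i j = D i j \<and> cs i j = {(e, True, const_e (?M i)), (const_e (- ?M j), True, e)}) \<or>
               (D' i j = (None, False) \<and> cs i j = {(const_e (?M i), False, e)}) \<or>
               (D' i j = (Some (const_e (- ?M j)), False) \<and> cs i j = {(e, False, const_e (- ?M j))}))"
    using assms unfolding pk_ok_def Let_def by auto
  show "C \<subseteq> C'" using C' by auto
  assume v: "v \<in> csem C'" and ij: "i \<le> ?n" "j \<le> ?n"
  have sat: "sat_c v c" if "c \<in> cs i j" for c
    using that v ij C' by (auto simp: csem_def)
  show "extrapolates (?M i) (?M j) (eval_dbm v D i j) (eval_dbm v D' i j)"
  proof (cases "fst (D i j)")
    case None
    then have "D' i j = D i j" using D'[rule_format, OF ij] by simp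
    then show ?thesis using None by (simp add: extrapolates_def eval_dbm_def eval_bnd_def)
  next
    case (Some e)
    have x: "eval_dbm v D i j = Bound (ev v e) (snd (D i j))"
      using Some by (simp add: eval_dbm_def eval_bnd_def)
    from D'[rule_format, OF ij] Some have "(D' i j = D i j \<and> cs i j = {(e, True, const_e (?M i)), (const_e (- ?M j), True, e)}) \<or>
        (D' i j = (None, False) \<and> cs i j = {(const_e (?M i), False, e)}) \<or>
        (D' i j = (Some (const_e (- ?M j)), False) \<and> cs i j = {(e, False, const_e (- ?M j))})"
      by simp
    then consider
        "D' i j = D i j" "sat_c v (e, True, const_e (?M i))" "sat_c v (const_e (- ?M j), True, e)"
      | "D' i j = (None, False)" "sat_c v (const_e (?M i), False, e)"
      | "D' i j = (Some (const_e (- ?M j)), False)" "sat_c v (e, False, const_e (- ?M j))"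
      by (elim disjE conjE) (blast intro: sat)+
    then show ?thesis
      using x Some by cases (auto simp: extrapolates_def eval_dbm_def eval_bnd_def sat_c_def)
  qed
qed

lemma extrapolates_dsat: "extrapolates Mi Mj x x' \<Longrightarrow> dsat x d \<Longrightarrow> dsat x' d"
  unfolding extrapolates_def by (auto split: if_splits)

lemma extrapolates_dsat_small:
  assumes "extrapolates Mi Mj x x'" "dsat x' (a - b)" "a \<le> Mi" "b \<le> Mj" "0 \<le> a" "0 \<le> b"
  shows "dsat x (a - b)"
  using assms unfolding extrapolates_def by (auto split: if_splits; linarith)

definition dbound_above :: "real \<Rightarrow> dbound \<Rightarrow> bool" where
  "dbound_above r x \<longleftrightarrow> (\<forall>c s. x = Bound c s \<longrightarrow> r < real_of_int c)"

lemma extrapolates_dbound_above: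
  assumes "extrapolates Mi Mj x x'" "dsat x' (a - b)" "Mi < a" "b \<le> Mj" "0 \<le> a" "0 \<le> b"
  shows "dbound_above (Mi - b) x"
  using assms unfolding extrapolates_def dbound_above_def by (auto split: if_splits)

lemma exists_between:
  fixes Lo Up :: "(real \<times> bool) set"
  assumes fin: "finite Lo" "finite Up"
    and compat: "\<And>l s u t. (l, s) \<in> Lo \<Longrightarrow> (u, t) \<in> Up \<Longrightarrow> (if s \<and> t then l \<le> u else l < u)"
  shows "\<exists>x. (\<forall>l s. (l, s) \<in> Lo \<longrightarrow> (if s then l \<le> x else l < x)) \<and>
    (\<forall>u t. (u, t) \<in> Up \<longrightarrow> (if t then x \<le> u else x < u))"
proof -
  define m where "m = Min (insert 0 (fst ` Up))"
  have m: "m - 1 < u" if "(u, t) \<in> Up" for u t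
  proof -
    have "m \<le> u" unfolding m_def using fin(2) that by (intro Min_le) force+
    then show ?thesis by simp
  qed
  show ?thesis
  proof (cases "Lo = {}")
    case True
    then show ?thesis using m by (intro exI[of _ "m - 1"]) (auto simp: less_imp_le)
  next
    case Lo: False
    define L where "L = Max (fst ` Lo)"
    have lL: "l \<le> L" if "(l, s) \<in> Lo" for l s
      using fin(1) that unfolding L_def by (force intro: Max_ge)
    have "L \<in> fst ` Lo" unfolding L_def using fin(1) Lo by (intro Max_in) auto
    then obtain sL where sL: "(L, sL) \<in> Lo" by force
    show ?thesis
    proof (cases "Up = {}")
      case True
      then show ?thesis using lL by (intro exI[of _ "L + 1"]) force
    next
      case Up: False
      define U where "U = Min (fst ` Up)"
      have uU: "U \<le> u" if "(u, t) \<in> Up" for u t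
        using fin(2) that unfolding U_def by (force intro: Min_le)
      have "U \<in> fst ` Up" unfolding U_def using fin(2) Up by (intro Min_in) auto
      then obtain tU where tU: "(U, tU) \<in> Up" by force
      have "L \<le> U" using compat[OF sL tU] by (auto split: if_splits)
      obtain x where lo: "\<And>l s. (l, s) \<in> Lo \<Longrightarrow> if s then l \<le> x else l < x"
        and up: "\<And>u t. (u, t) \<in> Up \<Longrightarrow> if t then x \<le> u else x < u"
      proof (cases "L < U")
        case True
        show ?thesis
        proof (rule that[of "(L + U) / 2"])
          show "if s then l \<le> (L + U) / 2 else l < (L + U) / 2" if "(l, s) \<in> Lo" for l s
            using lL[OF that] True by auto
          show "if t then (L + U) / 2 \<le> u else (L + U) / 2 < u" if "(u, t) \<in> Up" for u t
            using uU[OF that] True by auto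
        qed
      next
        case False
        then have LU: "L = U" using \<open>L \<le> U\<close> by simp
        show ?thesis
        proof (rule that[of L])
          show "if s then l \<le> L else l < L" if "(l, s) \<in> Lo" for l s
            using lL[OF that] compat[OF that tU] LU by (cases s) auto
          show "if t then L \<le> u else L < u" if "(u, t) \<in> Up" for u t
            using uU[OF that] compat[OF sL that] LU by (cases t) auto
        qed
      qed
      then show ?thesis by blast
    qed
  qed
qed

text \<open>The side condition dbound_above records that the large clocks not placed yet can still be
  put above their constants; the lower and upper bounds collected for k are compatible by the
  triangle inequality.\<close>

lemma extend_by_large_clock:
  fixes X :: dmat and M :: "nat \<Rightarrow> int" and \<rho> :: clockval
  assumes closed: "closed_on {..n} X" and row: "\<forall>k\<le>n. X 0 k \<le> 0"
    and T: "finite T" "T \<subseteq> {..n}" "0 \<in> T" and B: "finite B" "B \<subseteq> {..n}"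
    and k: "k \<in> B" "k \<notin> T" and \<rho>0: "\<rho> 0 = 0"
    and sat: "\<And>i j. i \<in> T \<Longrightarrow> j \<in> T \<Longrightarrow> dsat (X i j) (\<rho> i - \<rho> j)"
    and above: "\<And>t b. t \<in> T \<Longrightarrow> b \<in> B \<Longrightarrow> dbound_above (M b - \<rho> t) (X b t)"
  shows "\<exists>x::real. M k < x \<and> 0 \<le> x \<and> (\<forall>t\<in>T. dsat (X t k) (\<rho> t - x) \<and> dsat (X k t) (x - \<rho> t)) \<and>
    (\<forall>b\<in>B. dbound_above (M b - x) (X b k))"
proof -
  have kn: "k \<le> n" using k B by auto
  have tri: "X i j \<le> X i k + X k j" if "i \<le> n" "j \<le> n" for i j
    using closed that kn by (simp add: closed_on_def)
  define Lo1 where "Lo1 = (\<lambda>t. case X t k of Bound c s \<Rightarrow> (\<rho> t - c, s)) ` {t \<in> T. X t k \<noteq> Unbounded}"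
  define Lo2 where "Lo2 = (\<lambda>b. case X b k of Bound c s \<Rightarrow> (real_of_int (M b - c), False)) ` {b \<in> B. X b k \<noteq> Unbounded}"
  define Lo where "Lo = insert (of_int (M k), False) (Lo1 \<union> Lo2)"
  define Up where "Up = (\<lambda>t. case X k t of Bound c s \<Rightarrow> (\<rho> t + c, s)) ` {t \<in> T. X k t \<noteq> Unbounded}"
  have Lo1I: "(\<rho> t - c, s) \<in> Lo" if "t \<in> T" "X t k = Bound c s" for t c s
    using that by (force simp: Lo_def Lo1_def)
  have Lo2I: "(real_of_int (M b - c), False) \<in> Lo" if "b \<in> B" "X b k = Bound c s" for b c s
    using that by (force simp: Lo_def Lo2_def)
  have UpI: "(\<rho> t + c, s) \<in> Up" if "t \<in> T" "X k t = Bound c s" for t c s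
    using that by (force simp: Up_def)
  have compat: "if s \<and> s' then l \<le> u else l < u" if l: "(l, s) \<in> Lo" and u: "(u, s') \<in> Up" for l s u s'
  proof -
    obtain t c' where t: "t \<in> T" "X k t = Bound c' s'" "u = \<rho> t + c'"
      using u by (auto simp: Up_def split: dbound.splits)
    have tn: "t \<le> n" using t(1) T by auto
    consider "(l, s) = (of_int (M k), False)"
      | t0 c where "t0 \<in> T" "X t0 k = Bound c s" "l = \<rho> t0 - c"
      | b c s0 where "b \<in> B" "X b k = Bound c s0" "l = real_of_int (M b - c)" "\<not> s"
      using l by (auto simp: Lo_def Lo1_def Lo2_def split: dbound.splits)
    then show ?thesis
    proof cases
      case 1
      then show ?thesis using above[OF t(1) k(1)] t by (auto simp: dbound_above_def)
    next
      case (2 t0 c)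
      have "dsat (X t0 t) (\<rho> t0 - \<rho> t)" using sat[OF 2(1) t(1)] .
      moreover have "X t0 t \<le> X t0 k + X k t" using tri 2(1) tn T by auto
      ultimately have "dsat (Bound c s + Bound c' s') (\<rho> t0 - \<rho> t)"
        using dsat_mono 2(2) t(2) by metis
      then show ?thesis using 2(3) t(3) by (auto split: if_splits)
    next
      case (3 b c s0)
      have bn: "b \<le> n" using 3(1) B by auto
      have le: "X b t \<le> Bound (c + c') (s0 \<and> s')" using tri[OF bn tn] 3(2) t(2) by simp
      obtain d s1 where d: "X b t = Bound d s1" "M b - \<rho> t < d"
        using above[OF t(1) 3(1)] le by (cases "X b t") (auto simp: dbound_above_def)
      have "d \<le> c + c'" using le d(1) by auto
      then have "real_of_int (M b - c) < \<rho> t + c'" using d(2) by linarith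
      then show ?thesis using 3(3,4) t(3) by simp
    qed
  qed
  have "finite Lo" using T B by (simp add: Lo_def Lo1_def Lo2_def)
  moreover have "finite Up" using T by (simp add: Up_def)
  ultimately obtain x where "\<forall>l s. (l, s) \<in> Lo \<longrightarrow> (if s then l \<le> x else l < x)"
    and "\<forall>u s. (u, s) \<in> Up \<longrightarrow> (if s then x \<le> u else x < u)"
    using exists_between[OF _ _ compat] by iprover
  then have lo: "\<And>l s. (l, s) \<in> Lo \<Longrightarrow> if s then l \<le> x else l < x"
    and up: "\<And>u s. (u, s) \<in> Up \<Longrightarrow> if s then x \<le> u else x < u"
    by simp_all
  have "M k < x" using lo[of "of_int (M k)" False] by (simp add: Lo_def)
  moreover have lo1: "dsat (X t k) (\<rho> t - x)" if "t \<in> T" for t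
  proof (cases "X t k")
    case (Bound c s)
    then show ?thesis using lo[OF Lo1I[OF that Bound]] by (auto split: if_splits)
  qed simp
  moreover have "dsat (X k t) (x - \<rho> t)" if "t \<in> T" for t
  proof (cases "X k t")
    case (Bound c s)
    then show ?thesis using up[OF UpI[OF that Bound]] by (auto split: if_splits)
  qed simp
  moreover have "dbound_above (M b - x) (X b k)" if "b \<in> B" for b
    using lo[OF Lo2I[OF that]] by (auto simp: dbound_above_def)
  moreover have "0 \<le> x"
  proof -
    obtain c s where c: "X 0 k = Bound c s" "c \<le> 0" using row kn nonpos_dbound by blast
    then show ?thesis using lo1[OF T(3)] \<rho>0 by (auto split: if_splits)
  qed
  ultimately show ?thesis by blast
qed

lemma solves_extrapolated_closed:
  fixes X X' :: dmat and M :: "nat \<Rightarrow> int"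
  assumes closed: "closed_on {..n} X" and row: "\<forall>k\<le>n. X 0 k \<le> 0" and M0: "M 0 = 0"
    and ext: "\<And>i j. i \<le> n \<Longrightarrow> j \<le> n \<Longrightarrow> extrapolates (M i) (M j) (X i j) (X' i j)"
    and sol: "solves n X' \<eta>"
  shows "\<exists>\<eta>'. solves n X \<eta>' \<and> agree_below n M \<eta> \<eta>'"
proof -
  have \<eta>0: "\<eta> 0 = 0" and nn: "\<And>i. 0 \<le> \<eta> i"
    and sat': "\<And>i j. i \<le> n \<Longrightarrow> j \<le> n \<Longrightarrow> dsat (X' i j) (\<eta> i - \<eta> j)"
    using sol by (auto simp: solves_def)
  define S where "S = {i. i \<le> n \<and> \<eta> i \<le> M i}"
  define B where "B = {i. i \<le> n \<and> M i < \<eta> i}"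
  have S0: "0 \<in> S" using \<eta>0 M0 by (simp add: S_def)
  have SB: "S \<union> B = {..n}" "S \<inter> B = {}" "finite S" "finite B"
    by (auto simp: S_def B_def)
  define Inv where "Inv P \<rho> \<longleftrightarrow> (\<forall>i. i \<notin> P \<longrightarrow> \<rho> i = \<eta> i) \<and> (\<forall>t\<in>P. M t < \<rho> t) \<and>
       (\<forall>i. 0 \<le> \<rho> i) \<and> (\<forall>i \<in> S \<union> P. \<forall>j \<in> S \<union> P. dsat (X i j) (\<rho> i - \<rho> j)) \<and>
       (\<forall>t \<in> S \<union> P. \<forall>b \<in> B. dbound_above (M b - \<rho> t) (X b t))"
    for P and \<rho> :: clockval
  have "\<exists>\<rho>. Inv B \<rho>"
    using SB(4) subset_refl
  proof (induction B rule: finite_subset_induct')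
    case empty
    have "dsat (X i j) (\<eta> i - \<eta> j)" if "i \<in> S" "j \<in> S" for i j
      using extrapolates_dsat_small[OF ext sat'] that nn by (auto simp: S_def)
    moreover have "dbound_above (M b - \<eta> t) (X b t)" if "t \<in> S" "b \<in> B" for t b
      using extrapolates_dbound_above[OF ext sat'] that nn by (auto simp: S_def B_def)
    ultimately have "Inv {} \<eta>" by (simp add: Inv_def nn)
    then show ?case by blast
  next
    case (insert k P)
    then obtain \<rho> where I: "Inv P \<rho>" by blast
    have k: "k \<in> B" "k \<notin> S \<union> P" using insert SB(2) by auto
    have T: "finite (S \<union> P)" "S \<union> P \<subseteq> {..n}" "0 \<in> S \<union> P"
      using insert SB S0 by auto
    have "0 \<notin> P" using S0 SB(2) \<open>P \<subseteq> B\<close> by blast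
    then have \<rho>0: "\<rho> 0 = 0" using I \<eta>0 by (simp add: Inv_def)
    obtain x :: real where x: "M k < x" "0 \<le> x"
      "\<forall>t \<in> S \<union> P. dsat (X t k) (\<rho> t - x) \<and> dsat (X k t) (x - \<rho> t)"
      "\<forall>b\<in>B. dbound_above (M b - x) (X b k)"
    proof -
      have Bn: "B \<subseteq> {..n}" using SB(1) by blast
      have "dsat (X i j) (\<rho> i - \<rho> j)" if "i \<in> S \<union> P" "j \<in> S \<union> P" for i j
        using I that by (simp add: Inv_def)
      moreover have "dbound_above (M b - \<rho> t) (X b t)" if "t \<in> S \<union> P" "b \<in> B" for t b
        using I that by (simp add: Inv_def)
      ultimately show ?thesis
        using extend_by_large_clock[where \<rho> = \<rho> and M = M, OF closed row T SB(4) Bn k \<rho>0] that by blast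
    qed
    have "0 \<le> X k k" using closed k SB(1) by (auto simp: closed_on_def)
    then have "Inv (insert k P) (\<rho>(k := x))"
      using I x k by (auto simp: Inv_def dsat_zero)
    then show ?case by blast
  qed
  then obtain \<rho> where I: "Inv B \<rho>" ..
  have "solves n X \<rho>"
    using I SB(1) \<eta>0 S0 SB(2) by (auto simp: Inv_def solves_def)
  moreover have "agree_below n M \<eta> \<rho>"
    using I \<eta>0 S0 SB(2) by (fastforce simp: Inv_def agree_below_def S_def B_def)
  ultimately show ?thesis by blast
qed

definition initial_shape :: "nat \<Rightarrow> (nat \<Rightarrow> int) \<Rightarrow> dmat \<Rightarrow> bool" where
  "initial_shape n M X \<longleftrightarrow> (\<forall>i\<in>{1..n}. \<forall>j\<in>{1..n}. X i j = 0) \<and>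
     (\<forall>k\<in>{1..n}. X k 0 = Unbounded \<or> (\<exists>c s. X k 0 = Bound c s \<and> c \<le> M k)) \<and>
     (\<forall>k\<in>{1..n}. X 0 k = 0 \<or> (\<exists>c s. X 0 k = Bound c s \<and> - M k \<le> c))"

lemma initial_shape_sym_init:
  assumes wf: "wf_ptba A" and init: "(l, C, D) \<in> sym_init A lb ub" and v: "v \<in> csem C"
  shows "initial_shape (nclk (fst A)) (Mx A lb ub) (eval_dbm v D)"
proof -
  let ?g = "inv (fst A) (init (fst A))" and ?M = "Mx A lb ub" and ?Y = "eval_dbm v (up E_dbm)"
  have ag: "(C, D) \<in> app_guard ?g (C0 lb ub, up E_dbm)" using init by (auto simp: sym_init_def)
  have l0: "init (fst A) \<in> locs (fst A)" by (rule wf_init[OF wf])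
  have g: "?g \<in> all_guards A" using l0 by (auto simp: all_guards_def)
  have v0: "v \<in> csem (C0 lb ub)" using v csem_antimono[OF eval_app_guard(1)[OF ag]] by blast
  have X: "eval_dbm v D = guard_mat v ?g ?Y" using eval_app_guard(2)[OF ag v] .
  have "eval_dbm v D i j = 0" if "i \<in> {1..nclk (fst A)}" "j \<in> {1..nclk (fst A)}" for i j
    using guard_mat_clock_block[OF wf_inv(1)[OF wf l0]] X that by (simp add: eval_up_E_dbm)
  moreover have "eval_dbm v D k 0 = Unbounded \<or> (\<exists>c s. eval_dbm v D k 0 = Bound c s \<and> c \<le> ?M k)"
    if "k \<in> {1..nclk (fst A)}" for k
    using guard_mat_cases[of v ?g ?Y k 0] X that upper_atom_le_Mx[OF wf g _ _ v0]
    by (auto simp: eval_up_E_dbm)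
  moreover have "eval_dbm v D 0 k = 0 \<or> (\<exists>c s. eval_dbm v D 0 k = Bound c s \<and> - ?M k \<le> c)"
    if "k \<in> {1..nclk (fst A)}" for k
    using guard_mat_cases[of v ?g ?Y 0 k] X that lower_atom_le_Mx[OF wf g _ _ v0]
    by (fastforce simp: eval_up_E_dbm)
  ultimately show ?thesis by (simp add: initial_shape_def)
qed

text \<open>In an initial zone all clocks are equal, so the clocks whose maximal constant is nonnegative
  share one value in every valuation of the extrapolated zone as well.\<close>

lemma initial_small_clocks_equal:
  fixes X X' :: dmat and M :: "nat \<Rightarrow> int"
  assumes shape: "initial_shape n M X"
    and ext: "\<And>i j. i \<le> n \<Longrightarrow> j \<le> n \<Longrightarrow> extrapolates (M i) (M j) (X i j) (X' i j)"
    and sol: "solves n X' \<eta>"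
  shows "\<exists>t \<ge> 0. \<forall>r \<in> {1..n}. 0 \<le> M r \<longrightarrow> \<eta> r = t"
proof -
  define R where "R = {r \<in> {1..n}. 0 \<le> M r}"
  have R_le: "\<eta> r \<le> \<eta> r'" if "r \<in> R" "r' \<in> R" for r r'
  proof -
    have "X r r' = Bound 0 True" using shape that by (simp add: initial_shape_def R_def zero_dbound_def)
    then have "X' r r' = Bound 0 True" using ext[of r r'] that by (auto simp: R_def extrapolates_def)
    moreover have "dsat (X' r r') (\<eta> r - \<eta> r')" using sol that by (simp add: R_def solves_def)
    ultimately show ?thesis by simp
  qed
  define t where "t = (if R = {} then 0 else \<eta> (SOME r. r \<in> R))"
  have "\<eta> r = t" if "r \<in> R" for r
    using someI[of "\<lambda>r. r \<in> R", OF that] R_le that by (auto simp: t_def intro: antisym)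
  moreover have "0 \<le> t" using sol by (simp add: t_def solves_def)
  ultimately show ?thesis by (auto simp: R_def)
qed

text \<open>Moving every clock to that common value keeps the other clocks above their negative
  maximal constants.\<close>

lemma solves_extrapolated_initial:
  fixes X X' :: dmat and M :: "nat \<Rightarrow> int"
  assumes shape: "initial_shape n M X" and M0: "M 0 = 0"
    and ext: "\<And>i j. i \<le> n \<Longrightarrow> j \<le> n \<Longrightarrow> extrapolates (M i) (M j) (X i j) (X' i j)"
    and sol: "solves n X' \<eta>"
  shows "\<exists>\<eta>'. solves n X \<eta>' \<and> agree_below n M \<eta> \<eta>'"
proof -
  have \<eta>0: "\<eta> 0 = 0" and nn: "\<And>i. 0 \<le> \<eta> i"
    and sat': "\<And>i j. i \<le> n \<Longrightarrow> j \<le> n \<Longrightarrow> dsat (X' i j) (\<eta> i - \<eta> j)"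
    using sol by (auto simp: solves_def)
  have I1: "\<And>i j. i \<in> {1..n} \<Longrightarrow> j \<in> {1..n} \<Longrightarrow> X i j = 0"
    and I2: "\<And>k. k \<in> {1..n} \<Longrightarrow> X k 0 = Unbounded \<or> (\<exists>c s. X k 0 = Bound c s \<and> c \<le> M k)"
    and I3: "\<And>k. k \<in> {1..n} \<Longrightarrow> X 0 k = 0 \<or> (\<exists>c s. X 0 k = Bound c s \<and> - M k \<le> c)"
    using shape by (auto simp: initial_shape_def)
  obtain t where t0: "0 \<le> t" and tR: "\<And>r. r \<in> {1..n} \<Longrightarrow> 0 \<le> M r \<Longrightarrow> \<eta> r = t"
    using initial_small_clocks_equal[OF shape ext sol] by blast
  define \<eta>' where "\<eta>' i = (if i \<in> {1..n} then t else \<eta> i)" for i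
  have d00: "dsat (X 0 0) 0"
    using ext[of 0 0] sat'[of 0 0] \<eta>0 M0 by (auto simp: extrapolates_def split: if_splits)
  have dk0: "dsat (X k 0) t" if k: "k \<in> {1..n}" for k
  proof (cases "X k 0")
    case (Bound c s)
    then have "c \<le> M k" using I2[OF k] by auto
    moreover have "extrapolates (M k) 0 (X k 0) (X' k 0)" "dsat (X' k 0) (\<eta> k)"
      using ext[of k 0] sat'[of k 0] k \<eta>0 M0 by auto
    ultimately have "X' k 0 = X k 0 \<and> 0 \<le> M k"
      using Bound nn[of k] by (auto simp: extrapolates_def)
    then show ?thesis using \<open>dsat (X' k 0) (\<eta> k)\<close> tR k by simp
  qed simp
  have d0k: "dsat (X 0 k) (- t)" if k: "k \<in> {1..n}" for k
  proof (cases "X 0 k = 0")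
    case False
    then obtain c s where c: "X 0 k = Bound c s" "- M k \<le> c" using I3[OF k] by auto
    show ?thesis
    proof (cases "0 \<le> M k")
      case True
      have "extrapolates 0 (M k) (X 0 k) (X' 0 k)" "dsat (X' 0 k) (- \<eta> k)"
        using ext[of 0 k] sat'[of 0 k] k \<eta>0 M0 by auto
      then show ?thesis using c t0 tR[OF k True] by (auto simp: extrapolates_def)
    next
      case False
      then show ?thesis using c t0 by simp
    qed
  qed (use t0 in \<open>simp add: zero_dbound_def\<close>)
  have "dsat (X i j) (\<eta>' i - \<eta>' j)" if ij: "i \<le> n" "j \<le> n" for i j
  proof -
    consider "i = 0" "j = 0" | "i = 0" "j \<in> {1..n}" | "i \<in> {1..n}" "j = 0" | "i \<in> {1..n}" "j \<in> {1..n}"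
      using ij by fastforce
    then show ?thesis
      by cases (use d00 d0k dk0 I1 \<eta>0 in \<open>simp_all add: \<eta>'_def zero_dbound_def\<close>)
  qed
  then have "solves n X \<eta>'" using nn t0 \<eta>0 by (simp add: solves_def \<eta>'_def)
  moreover have "\<eta> i = \<eta>' i \<or> (M i < \<eta> i \<and> M i < \<eta>' i)" if i: "i \<in> {1..n}" for i
    using tR[OF i] nn[of i] t0 i by (cases "0 \<le> M i") (simp_all add: \<eta>'_def)
  then have "agree_below n M \<eta> \<eta>'" using \<eta>0 by (simp add: agree_below_def \<eta>'_def)
  ultimately show ?thesis by blast
qed

lemma extrapolates_neg_diag: "x < 0 \<Longrightarrow> extrapolates 0 0 x x' \<Longrightarrow> \<not> dsat x' 0"
  unfolding extrapolates_def by (cases x) (auto simp: zero_dbound_def less_dbound_def)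

lemma pk_ok_simulates:
  assumes wf: "wf_ptba A" and reach: "(l, C, D) \<in> sym_reach A lb ub"
    and pk: "pk_ok A lb ub (C, D) (C', D')" and z: "(v, \<eta>) \<in> zone (nclk (fst A)) C' D'"
  shows "\<exists>\<eta>'. (v, \<eta>') \<in> zone (nclk (fst A)) C D \<and> sim (fst A) v (l, \<eta>) (l, \<eta>')"
proof -
  let ?n = "nclk (fst A)" and ?M = "Mx A lb ub"
  have v': "v \<in> csem C'" and sol: "solves ?n (eval_dbm v D') \<eta>"
    using z by (auto simp: zone_iff_solves)
  have ext: "\<And>i j. i \<le> ?n \<Longrightarrow> j \<le> ?n \<Longrightarrow> extrapolates (?M i) (?M j) (eval_dbm v D i j) (eval_dbm v D' i j)"
    using pk_ok_extrapolates(2)[OF pk v'] .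
  have v: "v \<in> csem C" using v' csem_antimono[OF pk_ok_extrapolates(1)[OF pk]] by blast
  note inv = sym_reach_inv[OF wf reach]
  have v0: "v \<in> csem (C0 lb ub)" using v csem_antimono inv by blast
  have "\<exists>\<eta>'. solves ?n (eval_dbm v D) \<eta>' \<and> agree_below ?n ?M \<eta> \<eta>'"
  proof (cases "(l, C, D) \<in> sym_init A lb ub")
    case True
    then show ?thesis
      by (intro solves_extrapolated_initial[OF initial_shape_sym_init[OF wf True v] Mx_zero _ sol] ext)
  next
    case False
    then have can: "canonical ?n (eval_dbm v D)" using inv v by blast
    have "dsat (eval_dbm v D' 0 0) (\<eta> 0 - \<eta> 0)" using sol le0 unfolding solves_def by blast
    then have "dsat (eval_dbm v D' 0 0) 0" by simp
    then have "\<not> eval_dbm v D 0 0 < 0"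
      using extrapolates_neg_diag ext[of 0 0] by auto
    then have "closed_on {..?n} (eval_dbm v D)" using can by (simp add: canonical_def)
    moreover have "\<forall>k\<le>?n. eval_dbm v D 0 k \<le> 0" using can by (simp add: canonical_def)
    ultimately show ?thesis
      by (intro solves_extrapolated_closed[where M = ?M, OF _ _ Mx_zero _ sol] ext)
  qed
  then obtain \<eta>' where "solves ?n (eval_dbm v D) \<eta>'" "agree_below ?n ?M \<eta> \<eta>'" by blast
  then show ?thesis
    using v sim_if_agree_below[OF wf v0] inv by (auto simp: zone_iff_solves)
qed

lemma alpha_pk_is_abstraction:
  assumes wf: "wf_ptba A"
  shows "is_abstraction A lb ub (alpha_pk A lb ub)"
  unfolding is_abstraction_def Let_def
proof (intro ballI)
  fix S1 S2 assume S1: "S1 \<in> sym_reach A lb ub" and S2: "S2 \<in> alpha_pk A lb ub S1"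
  obtain l C D where s1: "S1 = (l, C, D)" by (cases S1)
  obtain C' D' where s2: "S2 = (l, C', D')" and pk: "pk_ok A lb ub (C, D) (C', D')"
    using S2 by (auto simp: s1 alpha_pk_def)
  let ?n = "nclk (fst A)"
  have "zone ?n C' D \<subseteq> zone ?n C' D'"
    using pk_ok_extrapolates(2)[OF pk] extrapolates_dsat by (fastforce simp: zone_iff_solves solves_def)
  then show "case S1 of (l, C, D) \<Rightarrow> case S2 of (l', C', D') \<Rightarrow>
      l' = l \<and> csem C' \<subseteq> csem C \<and> zone ?n C' D \<subseteq> zone ?n C' D' \<and>
      (\<forall>v \<eta>. (v, \<eta>) \<in> zone ?n C' D' \<longrightarrow> (\<exists>\<eta>'. (v, \<eta>') \<in> zone ?n C D \<and> sim (fst A) v (l', \<eta>) (l, \<eta>')))"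
    using csem_antimono[OF pk_ok_extrapolates(1)[OF pk]] pk_ok_simulates[OF wf S1[unfolded s1] pk]
    by (simp add: s1 s2)
qed

lemma extrapolates_range:
  assumes "extrapolates Mi Mj x x'" "\<bar>Mi\<bar> \<le> K" "\<bar>Mj\<bar> \<le> K"
  shows "x' \<in> insert Unbounded ((\<lambda>(c, s). Bound c s) ` ({-K..K} \<times> UNIV))"
  using assms unfolding extrapolates_def by (auto simp: image_iff abs_le_iff)

lemma finite_bounded_pvals: "finite {v :: 'p::finite pval. \<forall>p. lb p \<le> v p \<and> v p \<le> ub p}"
proof (rule finite_subset)
  show "{v :: 'p pval. \<forall>p. lb p \<le> v p \<and> v p \<le> ub p} \<subseteq>
      {v. \<forall>p. (p \<in> UNIV \<longrightarrow> v p \<in> {Min (range lb)..Max (range ub)}) \<and> (p \<notin> UNIV \<longrightarrow> v p = 0)}"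
  proof clarsimp
    fix v :: "'p pval" and p assume v: "\<forall>p. lb p \<le> v p \<and> v p \<le> ub p"
    have "Min (range lb) \<le> lb p" "ub p \<le> Max (range ub)" by (auto intro: Min_le Max_ge)
    then show "Min (range lb) \<le> v p \<and> v p \<le> Max (range ub)" using v[rule_format, of p] by linarith
  qed
  show "finite {v :: 'p pval. \<forall>p. (p \<in> UNIV \<longrightarrow> v p \<in> {Min (range lb)..Max (range ub)}) \<and> (p \<notin> UNIV \<longrightarrow> v p = 0)}"
    by (rule finite_set_of_finite_funs) auto
qed

text \<open>A zone is determined by its parameter valuations and the evaluated bounds under each of them;
  the bounds are fixed outside that set so that only finitely many descriptions arise.\<close>

definition zone_of :: "nat \<Rightarrow> 'p pval set \<Rightarrow> ('p pval \<times> nat \<times> nat \<Rightarrow> dbound) \<Rightarrow> ('p pval \<times> clockval) set" where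
  "zone_of n V G = {(v, \<eta>). v \<in> V \<and> solves n (\<lambda>i j. G (v, i, j)) \<eta>}"

lemma zone_eq_zone_of:
  "zone n C D = zone_of n (csem C) (\<lambda>(v, i, j). if v \<in> csem C \<and> i \<le> n \<and> j \<le> n then eval_dbm v D i j else Unbounded)"
  by (auto simp: zone_iff_solves zone_of_def solves_def)

lemma alpha_pk_finite:
  assumes wf: "wf_ptba A"
  shows "finite_abstraction A lb ub (alpha_pk A lb ub)"
proof -
  let ?n = "nclk (fst A)" and ?M = "Mx A lb ub"
  define Box where "Box = {v :: 'b pval. \<forall>p. lb p \<le> v p \<and> v p \<le> ub p}"
  define K where "K = Max ((\<lambda>i. \<bar>?M i\<bar>) ` {0..?n})"
  define Vals where "Vals = insert Unbounded ((\<lambda>(c, s). Bound c s) ` ({-K..K} \<times> UNIV))"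
  define Dom where "Dom = Box \<times> {0..?n} \<times> {0..?n}"
  define FG where "FG = {G. \<forall>x. (x \<in> Dom \<longrightarrow> G x \<in> Vals) \<and> (x \<notin> Dom \<longrightarrow> G x = Unbounded)}"
  have K: "i \<le> ?n \<Longrightarrow> \<bar>?M i\<bar> \<le> K" for i unfolding K_def by (rule Max_ge) auto
  have "finite FG"
    unfolding FG_def Dom_def Box_def Vals_def using finite_bounded_pvals by (intro finite_set_of_finite_funs) auto
  moreover have "finite (locs (fst A))" using wf by (auto simp: wf_ptba_def Let_def)
  moreover have "finite Box" unfolding Box_def by (rule finite_bounded_pvals)
  moreover have "sem_state ?n ` (\<Union>S \<in> sym_reach A lb ub. alpha_pk A lb ub S) \<subseteq>
      (\<lambda>(l, V, G). (l, zone_of ?n V G)) ` (locs (fst A) \<times> Pow Box \<times> FG)"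
  proof
    fix x assume "x \<in> sem_state ?n ` (\<Union>S \<in> sym_reach A lb ub. alpha_pk A lb ub S)"
    then obtain l C D C' D' where reach: "(l, C, D) \<in> sym_reach A lb ub"
      and pk: "pk_ok A lb ub (C, D) (C', D')" and x: "x = sem_state ?n (l, C', D')"
      by (auto simp: alpha_pk_def)
    have l: "l \<in> locs (fst A)" and C0: "C0 lb ub \<subseteq> C" using sym_reach_inv[OF wf reach] by auto
    have VB: "csem C' \<subseteq> Box"
      using csem_antimono[OF pk_ok_extrapolates(1)[OF pk]] csem_antimono[OF C0] csem_C0_bounds
      by (fastforce simp: Box_def)
    define G where "G = (\<lambda>(v, i, j). if v \<in> csem C' \<and> i \<le> ?n \<and> j \<le> ?n then eval_dbm v D' i j else Unbounded)"
    have "G (v, i, j) \<in> Vals" for v i j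
      using extrapolates_range[OF pk_ok_extrapolates(2)[OF pk] K K] by (simp add: G_def Vals_def)
    moreover have "G (v, i, j) = Unbounded" if "(v, i, j) \<notin> Dom" for v i j
      using that VB by (auto simp: G_def Dom_def)
    ultimately have "G \<in> FG" by (auto simp: FG_def)
    moreover have "x = (l, zone_of ?n (csem C') G)"
      by (simp add: x sem_state_def zone_eq_zone_of G_def)
    ultimately show "x \<in> (\<lambda>(l, V, G). (l, zone_of ?n V G)) ` (locs (fst A) \<times> Pow Box \<times> FG)"
      using l VB by force
  qed
  ultimately show ?thesis
    unfolding finite_abstraction_def by (simp add: finite_subset)
qed

theorem lemma2:
  fixes A :: "('l, 'p::finite) ptba" and lb ub :: "'p \<Rightarrow> int"
  assumes "wf_ptba A"
  shows "is_abstraction A lb ub (alpha_pk A lb ub) \<and> finite_abstraction A lb ub (alpha_pk A lb ub)"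
  using alpha_pk_is_abstraction[OF assms] alpha_pk_finite[OF assms] by simp

end
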